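(* Let $k\ge1$ and $r\ge1$ be integers. Then for all sufficiently large $n$, $$\Delta^r(\Delta_k(n)):=\sum_{i=0}^{r}\binom{r}{i}(-1)^{r+i}\Delta_k(n+i)>0.$$
   Context: For an integer $k\ge1$, $\Delta_k(n)$ is defined by $\sum_{n\ge0}\Delta_k(n)q^n=\prod_{m\ge1}\frac{(1-q^{2m})(1-q^{(2k+1)m})}{(1-q^m)^3(1-q^{(4k+2)m})}$. *)

theory Defs
  imports "HOL-Computational_Algebra.Formal_Power_Series"
begin

definition Delta_factor :: "nat \<Rightarrow> nat \<Rightarrow> rat fps" where
  "Delta_factor k m =
     ((1 - fps_X ^ (2 * m)) * (1 - fps_X ^ ((2 * k + 1) * m))) /
     ((1 - fps_X ^ m) ^ 3 * (1 - fps_X ^ ((4 * k + 2) * m)))"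

text \<open>Coefficient of q^n in the infinite product over m \<ge> 1. Factors with m > n are
  congruent to 1 modulo q^(n+1), so truncating the product at m = n gives the
  coefficient of the infinite product exactly.\<close>
definition Delta :: "nat \<Rightarrow> nat \<Rightarrow> rat" where
  "Delta k n = fps_nth (\<Prod>m\<in>{1..n}. Delta_factor k m) n"

end

(*
  The generating function of Delta_k is the product over m >= 1 of (1 - q^m)^(-e(m)), where
  e(m) = 3 for odd m not divisible by 2k + 1 and e(m) = 2 otherwise: Delta_k(n) counts partitions
  of n in which a part of size m comes in e(m) colours, and the r-th forward difference is the
  coefficient of q^(n+r) in (1 - q)^r times this product.

  Since the q-integers [2^i]_q and [2j+1]_q are pairwise coprime, Bezout gives polynomials R1, R2
  with (1 - q)^r = 1/(r+1)! prod_{a=2}^{r+1} (1 - q^a) + R1 prod_i (1 - q^(2^i)) + R2 prod_j (1 - q^(2j+1)),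
  i, j = 1, ..., r + 1. In the first term the factors cancel against the product, leaving the
  partial sums of p(n), the number of partitions with the colours of 1, ..., r + 1 reduced by one.
  In the other two terms, trading each cancelled factor 1 / (1 - q^b) for one of
  1 / (1 - q), ..., 1 / (1 - q^(r+1)) costs at most a factor b, so they are O(p(n + r)).
  Finally p grows so fast that p(n) = o(p(0) + ... + p(n)), and the first term wins.
*)

theory Submission
  imports
    Defs
    "HOL-Computational_Algebra.Polynomial_Factorial"
    "HOL-Computational_Algebra.Polynomial_FPS"
    "HOL-Computational_Algebra.Field_as_Ring"
begin

unbundle fps_syntax

section \<open>Coefficientwise order on power series\<close>

definition fps_nonneg :: "'a::linordered_idom fps \<Rightarrow> bool" where
  "fps_nonneg f \<longleftrightarrow> (\<forall>n. 0 \<le> f $ n)"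

definition fps_le :: "'a::linordered_idom fps \<Rightarrow> 'a fps \<Rightarrow> bool" where
  "fps_le f g \<longleftrightarrow> (\<forall>n. f $ n \<le> g $ n)"

definition fps_mono_coeffs :: "'a::linordered_idom fps \<Rightarrow> bool" where
  "fps_mono_coeffs f \<longleftrightarrow> (\<forall>n. f $ n \<le> f $ Suc n)"

lemma fps_nonneg_1: "fps_nonneg 1"
  and fps_nonneg_of_nat: "fps_nonneg (of_nat c)"
  and fps_nonneg_X_power: "fps_nonneg (fps_X ^ k)"
  by (simp_all add: fps_nonneg_def fps_of_nat fps_X_power_nth)

lemma fps_nonneg_mult: "fps_nonneg f \<Longrightarrow> fps_nonneg g \<Longrightarrow> fps_nonneg (f * g)"
  unfolding fps_nonneg_def fps_mult_nth by (auto intro!: sum_nonneg)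

lemma fps_nonneg_power: "fps_nonneg f \<Longrightarrow> fps_nonneg (f ^ k)"
  by (induction k) (auto intro: fps_nonneg_mult fps_nonneg_1)

lemma fps_nonneg_prod: "(\<And>x. x \<in> A \<Longrightarrow> fps_nonneg (f x)) \<Longrightarrow> fps_nonneg (\<Prod>x\<in>A. f x)"
  by (induction A rule: infinite_finite_induct) (auto intro: fps_nonneg_mult fps_nonneg_1)

lemma fps_le_iff_nonneg_diff: "fps_le f g \<longleftrightarrow> fps_nonneg (g - f)"
  by (simp add: fps_le_def fps_nonneg_def)

lemma fps_le_refl: "fps_le f f"
  by (simp add: fps_le_def)

lemma fps_le_trans [trans]: "fps_le f g \<Longrightarrow> fps_le g h \<Longrightarrow> fps_le f h"
  unfolding fps_le_def by (meson order_trans)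

lemma fps_le_add: "fps_le a b \<Longrightarrow> fps_le c d \<Longrightarrow> fps_le (a + c) (b + d)"
  unfolding fps_le_def by (simp add: add_mono)

lemma fps_le_sum: "(\<And>x. x \<in> A \<Longrightarrow> fps_le (f x) (g x)) \<Longrightarrow> fps_le (\<Sum>x\<in>A. f x) (\<Sum>x\<in>A. g x)"
  unfolding fps_le_def fps_sum_nth by (auto intro: sum_mono)

lemma fps_le_sum_subset:
  assumes "finite B" "A \<subseteq> B" "\<And>x. x \<in> B \<Longrightarrow> fps_nonneg (f x)"
  shows "fps_le (\<Sum>x\<in>A. f x) (\<Sum>x\<in>B. f x)"
  using assms unfolding fps_le_def fps_sum_nth fps_nonneg_def by (auto intro!: sum_mono2)

lemma fps_le_mult_left: "fps_nonneg c \<Longrightarrow> fps_le a b \<Longrightarrow> fps_le (c * a) (c * b)"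
  unfolding fps_le_iff_nonneg_diff by (metis fps_nonneg_mult right_diff_distrib)

lemma fps_le_mult_mono:
  assumes "fps_nonneg a" "fps_nonneg c" "fps_le a b" "fps_le c d"
  shows "fps_le (a * c) (b * d)"
proof -
  have "fps_nonneg b"
    using assms(1,3) unfolding fps_le_def fps_nonneg_def by (meson order_trans)
  have "fps_le (a * c) (b * c)"
    using fps_le_mult_left[OF assms(2,3)] by (simp add: mult.commute)
  also have "fps_le (b * c) (b * d)"
    using \<open>fps_nonneg b\<close> assms(4) by (rule fps_le_mult_left)
  finally show ?thesis .
qed

lemma fps_le_prod:
  "(\<And>x. x \<in> A \<Longrightarrow> fps_nonneg (f x)) \<Longrightarrow> (\<And>x. x \<in> A \<Longrightarrow> fps_le (f x) (g x))
   \<Longrightarrow> fps_le (\<Prod>x\<in>A. f x) (\<Prod>x\<in>A. g x)"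
proof (induction A rule: infinite_finite_induct)
  case (insert x F)
  then show ?case
    by (auto intro!: fps_le_mult_mono fps_nonneg_prod)
qed (auto simp: fps_le_refl)

lemma fps_one_le_iff: "fps_le 1 g \<longleftrightarrow> fps_nonneg g \<and> 1 \<le> g $ 0"
  unfolding fps_le_def fps_nonneg_def
  by (metis (no_types, lifting) fps_one_nth order.trans zero_le_one)

lemma fps_le_mult_one_le: "fps_nonneg f \<Longrightarrow> fps_le 1 g \<Longrightarrow> fps_le f (f * g)"
  using fps_le_mult_left[of f 1 g] by simp

lemma fps_one_le_power: "fps_le 1 y \<Longrightarrow> fps_le 1 (y ^ j)"
proof (induction j)
  case (Suc j)
  have "fps_le (1 * 1) (y * y ^ j)"
    using Suc by (intro fps_le_mult_mono fps_nonneg_1) auto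
  then show ?case
    by simp
qed (simp add: fps_le_refl)

lemma fps_le_of_nat_mult: "fps_nonneg w \<Longrightarrow> k \<le> E \<Longrightarrow> fps_le (of_nat k * w) (of_nat E * w)"
  unfolding fps_le_iff_nonneg_diff
  by (metis fps_nonneg_mult fps_nonneg_of_nat left_diff_distrib of_nat_diff)

lemma fps_mono_coeffsD: "fps_mono_coeffs f \<Longrightarrow> i \<le> n \<Longrightarrow> f $ i \<le> f $ n"
  unfolding fps_mono_coeffs_def by (rule lift_Suc_mono_le[where f = "\<lambda>n. f $ n"]) auto

lemma fps_mono_coeffs_X_power_mult:
  "fps_nonneg f \<Longrightarrow> fps_mono_coeffs f \<Longrightarrow> fps_mono_coeffs (fps_X ^ a * f)"
  unfolding fps_mono_coeffs_def fps_nonneg_def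
  by (auto simp: fps_X_power_mult_nth not_less Suc_diff_le)

lemma fps_le_X_power_mult:
  "fps_nonneg f \<Longrightarrow> fps_mono_coeffs f \<Longrightarrow> fps_le (fps_X ^ a * f) f"
  unfolding fps_le_def fps_nonneg_def
  by (auto simp: fps_X_power_mult_nth intro: fps_mono_coeffsD)

section \<open>Generating functions of coloured partitions\<close>

definition geo_fps :: "nat \<Rightarrow> 'a::comm_ring_1 fps" where
  "geo_fps m = Abs_fps (\<lambda>n. if m dvd n then 1 else 0)"

lemma geo_fps_nth: "geo_fps m $ n = (if m dvd n then 1 else 0)"
  by (simp add: geo_fps_def)

lemma one_minus_X_power_mult_geo_fps:
  assumes "m \<ge> 1"
  shows "(1 - fps_X ^ m) * geo_fps m = 1"
proof (rule fps_ext)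
  fix n
  have "((1 - fps_X ^ m) * geo_fps m) $ n = geo_fps m $ n - (fps_X ^ m * geo_fps m) $ n"
    by (simp add: algebra_simps)
  also have "\<dots> = (if n = 0 then 1 else 0)"
    using assms by (auto simp: fps_X_power_mult_nth geo_fps_nth dvd_minus_self dest: dvd_imp_le)
  finally show "((1 - fps_X ^ m) * geo_fps m) $ n = 1 $ n"
    by simp
qed

lemma inverse_one_minus_X_power: "m \<ge> 1 \<Longrightarrow> inverse (1 - fps_X ^ m :: 'a::field fps) = geo_fps m"
  by (rule fps_inverse_unique) (rule one_minus_X_power_mult_geo_fps)

lemma fps_nonneg_geo_fps: "fps_nonneg (geo_fps m)"
  by (simp add: fps_nonneg_def geo_fps_nth)

lemma geo_fps_power_nth_less:
  "i < m \<Longrightarrow> (geo_fps m ^ j :: 'a::comm_ring_1 fps) $ i = (if i = 0 then 1 else 0)"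
proof (induction j arbitrary: i)
  case (Suc j)
  have "(geo_fps m ^ Suc j :: 'a fps) $ i = (\<Sum>t=0..i. geo_fps m $ t * (geo_fps m ^ j) $ (i - t))"
    by (simp add: fps_mult_nth)
  also have "\<dots> = (\<Sum>t=0..i. if t = 0 then (geo_fps m ^ j :: 'a fps) $ i else 0)"
    using Suc.prems by (intro sum.cong) (auto simp: geo_fps_nth dest: dvd_imp_le)
  finally show ?case
    using Suc by simp
qed simp

lemma fps_mult_nth_eq_left:
  fixes f g :: "'a::comm_ring_1 fps"
  assumes "g $ 0 = 1" "\<And>t. 0 < t \<Longrightarrow> t \<le> n \<Longrightarrow> g $ t = 0"
  shows "(f * g) $ n = f $ n"
proof -
  have "(f * g) $ n = (\<Sum>i=0..n. if i = n then f $ n else 0)"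
    unfolding fps_mult_nth using assms by (intro sum.cong) auto
  then show ?thesis
    by simp
qed

text \<open>\<^term>\<open>part_gf e N\<close> is the generating function of partitions into parts at most \<open>N\<close>
  in which a part of size \<open>m\<close> comes in \<open>e m\<close> colours.\<close>

definition part_gf :: "(nat \<Rightarrow> nat) \<Rightarrow> nat \<Rightarrow> rat fps" where
  "part_gf e N = (\<Prod>m\<in>{1..N}. geo_fps m ^ e m)"

definition part_count :: "(nat \<Rightarrow> nat) \<Rightarrow> nat \<Rightarrow> rat" where
  "part_count e n = part_gf e n $ n"

lemma part_gf_0 [simp]: "part_gf e 0 = 1"
  by (simp add: part_gf_def)

lemma part_gf_Suc: "part_gf e (Suc N) = part_gf e N * geo_fps (Suc N) ^ e (Suc N)"
  by (simp add: part_gf_def)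

lemma fps_nonneg_part_gf: "fps_nonneg (part_gf e N)"
  unfolding part_gf_def by (auto intro!: fps_nonneg_prod fps_nonneg_power fps_nonneg_geo_fps)

lemma part_count_nonneg: "0 \<le> part_count e n"
  using fps_nonneg_part_gf by (simp add: part_count_def fps_nonneg_def)

lemma part_gf_nth: "n \<le> N \<Longrightarrow> part_gf e N $ n = part_count e n"
  unfolding part_count_def
proof (induction N rule: dec_induct)
  case (step N)
  have "part_gf e (Suc N) $ n = part_gf e N $ n"
    unfolding part_gf_Suc using step by (intro fps_mult_nth_eq_left) (auto simp: geo_fps_power_nth_less)
  then show ?case
    using step by simp
qed simp

lemma one_minus_X_power_mult_part_gf:
  assumes "1 \<le> b" "b \<le> N" "1 \<le> e b"
  shows "(1 - fps_X ^ b) * part_gf e N = part_gf (e(b := e b - 1)) N"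
proof -
  have b: "b \<in> {1..N}"
    using assms by auto
  define R :: "rat fps" where "R = (\<Prod>m\<in>{1..N}-{b}. geo_fps m ^ e m)"
  have "part_gf e N = geo_fps b ^ e b * R"
    unfolding part_gf_def R_def by (rule prod.remove[OF _ b]) simp
  also have "geo_fps b ^ e b = geo_fps b * geo_fps b ^ (e b - 1)"
    using assms by (simp flip: power_Suc)
  finally have "(1 - fps_X ^ b) * part_gf e N = ((1 - fps_X ^ b) * geo_fps b) * (geo_fps b ^ (e b - 1) * R)"
    by (simp only: mult.assoc)
  also have "\<dots> = geo_fps b ^ (e b - 1) * R"
    using one_minus_X_power_mult_geo_fps[OF assms(1), where 'a=rat] by simp
  also have "\<dots> = part_gf (e(b := e b - 1)) N"
    unfolding part_gf_def R_def by (subst prod.remove[OF _ b]) (auto intro!: prod.cong)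
  finally show ?thesis .
qed

lemma fps_mono_coeffs_part_gf:
  assumes "1 \<le> e 1" "1 \<le> N"
  shows "fps_mono_coeffs (part_gf e N)"
  unfolding fps_mono_coeffs_def
proof
  fix n
  have "0 \<le> ((1 - fps_X) * part_gf e N) $ Suc n"
    using one_minus_X_power_mult_part_gf[of 1 N e] assms fps_nonneg_part_gf
    by (simp add: fps_nonneg_def)
  then show "part_gf e N $ n \<le> part_gf e N $ Suc n"
    by (simp add: algebra_simps fps_X_mult_nth)
qed

text \<open>Multiplying by \<open>1 / (1 - q)\<close> takes partial sums, and the factor removed from
  \<^term>\<open>part_gf e N\<close> is one of the \<open>e 1\<close> factors \<open>1 / (1 - q)\<close>.\<close>

lemma part_gf_nth_eq_sum:
  assumes "1 \<le> e 1" "1 \<le> N" "m \<le> N"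
  shows "part_gf e N $ m = (\<Sum>i=0..m. part_count (e(1 := e 1 - 1)) i)"
proof -
  define F where "F = part_gf (e(1 := e 1 - 1)) N"
  have "part_gf e N = ((1 - fps_X) * geo_fps 1) * part_gf e N"
    using one_minus_X_power_mult_geo_fps[of 1, where 'a=rat] by simp
  also have "\<dots> = geo_fps 1 * ((1 - fps_X) * part_gf e N)"
    by (simp only: mult_ac)
  also have "(1 - fps_X) * part_gf e N = F"
    unfolding F_def using one_minus_X_power_mult_part_gf[of 1 N e] assms by simp
  finally have "part_gf e N $ m = (\<Sum>i=0..m. F $ (m - i))"
    by (simp add: fps_mult_nth geo_fps_nth)
  also have "\<dots> = (\<Sum>i=0..m. F $ i)"
    by (subst sum.atLeastAtMost_rev) (intro sum.cong refl, auto)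
  also have "\<dots> = (\<Sum>i=0..m. part_count (e(1 := e 1 - 1)) i)"
    unfolding F_def using assms by (intro sum.cong refl part_gf_nth) auto
  finally show ?thesis .
qed

definition colours_minus :: "(nat \<Rightarrow> nat) \<Rightarrow> nat multiset \<Rightarrow> nat \<Rightarrow> nat" where
  "colours_minus e T = (\<lambda>m. e m - count T m)"

lemma colours_minus_empty [simp]: "colours_minus e {#} = e"
  by (simp add: colours_minus_def)

lemma colours_minus_colours_minus: "colours_minus (colours_minus e A) B = colours_minus e (A + B)"
  by (auto simp: colours_minus_def fun_eq_iff)

lemma colours_minus_single: "colours_minus e {#b#} = e(b := e b - 1)"
  by (auto simp: colours_minus_def fun_eq_iff)

lemma prod_mset_one_minus_X_power_mult_part_gf:
  assumes "\<And>m. count T m \<le> e m" "\<And>b. b \<in># T \<Longrightarrow> 1 \<le> b \<and> b \<le> N"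
  shows "(\<Prod>b\<in>#T. 1 - fps_X ^ b) * part_gf e N = part_gf (colours_minus e T) N"
  using assms
proof (induction T)
  case (add b T)
  have IH: "(\<Prod>b\<in>#T. 1 - fps_X ^ b) * part_gf e N = part_gf (colours_minus e T) N"
  proof (rule add.IH)
    show "count T m \<le> e m" for m
      using add.prems(1)[of m] by (simp split: if_splits)
  qed (use add.prems(2) in auto)
  have "count T b + 1 \<le> e b"
    using add.prems(1)[of b] by simp
  then have "(1 - fps_X ^ b) * part_gf (colours_minus e T) N
      = part_gf ((colours_minus e T)(b := colours_minus e T b - 1)) N"
    using add.prems(2)[of b] by (intro one_minus_X_power_mult_part_gf) (auto simp: colours_minus_def)
  also have "(colours_minus e T)(b := colours_minus e T b - 1) = colours_minus e (add_mset b T)"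
    by (auto simp: colours_minus_def fun_eq_iff)
  finally show ?case
    using IH by (simp add: mult.assoc)
qed simp

lemma prod_one_minus_X_power_mult_part_gf:
  assumes "finite A" "\<And>b. b \<in> A \<Longrightarrow> 1 \<le> b \<and> b \<le> N \<and> 1 \<le> e b"
  shows "(\<Prod>b\<in>A. 1 - fps_X ^ b) * part_gf e N = part_gf (colours_minus e (mset_set A)) N"
proof -
  have "(\<Prod>b\<in>#mset_set A. 1 - fps_X ^ b) * part_gf e N = part_gf (colours_minus e (mset_set A)) N"
  proof (rule prod_mset_one_minus_X_power_mult_part_gf)
    show "count (mset_set A) m \<le> e m" for m
      using assms by (cases "m \<in> A") (auto simp: count_mset_set')
  qed (use assms in auto)
  then show ?thesis
    by (simp add: prod_unfold_prod_mset)
qed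

section \<open>Exchanging factors of the product\<close>

definition qint_fps :: "nat \<Rightarrow> rat fps" where
  "qint_fps b = (\<Sum>i<b. fps_X ^ i)"

lemma qint_fps_mult_nth: "(qint_fps b * f) $ n = (\<Sum>i<b. if i \<le> n then f $ (n - i) else 0)"
  unfolding qint_fps_def
  by (simp add: sum_distrib_right fps_sum_nth fps_X_power_mult_nth) (intro sum.cong refl, auto)

lemma qint_fps_mult_nth_le:
  assumes "fps_nonneg f" "fps_mono_coeffs f"
  shows "(qint_fps b * f) $ n \<le> of_nat b * f $ n"
proof -
  have "(qint_fps b * f) $ n \<le> (\<Sum>i<b. f $ n)"
    unfolding qint_fps_mult_nth using assms
    by (intro sum_mono) (auto simp: fps_nonneg_def intro: fps_mono_coeffsD)
  then show ?thesis
    by simp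
qed

lemma nth_le_qint_fps_mult:
  assumes "fps_nonneg f" "1 \<le> b"
  shows "f $ n \<le> (qint_fps b * f) $ n"
proof -
  have "(qint_fps b * f) $ n = (\<Sum>i\<in>insert 0 {1..<b}. if i \<le> n then f $ (n - i) else 0)"
    unfolding qint_fps_mult_nth using assms(2) by (intro sum.cong) auto
  also have "\<dots> = f $ n + (\<Sum>i\<in>{1..<b}. if i \<le> n then f $ (n - i) else 0)"
    by simp
  also have "\<dots> \<ge> f $ n"
    using assms(1) by (intro add_increasing2 sum_nonneg) (auto simp: fps_nonneg_def)
  finally show ?thesis .
qed

lemma part_gf_remove_eq_qint_fps_mult:
  assumes "1 \<le> e b" "1 \<le> e 1" "1 \<le> b" "b \<le> N"
  shows "part_gf (e(b := e b - 1)) N = qint_fps b * part_gf (e(1 := e 1 - 1)) N"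
proof -
  have "part_gf (e(b := e b - 1)) N = (1 - fps_X ^ b) * part_gf e N"
    using one_minus_X_power_mult_part_gf assms by simp
  also have "\<dots> = qint_fps b * ((1 - fps_X) * part_gf e N)"
    unfolding qint_fps_def one_diff_power_eq by (simp add: mult_ac)
  also have "(1 - fps_X) * part_gf e N = part_gf (e(1 := e 1 - 1)) N"
    using one_minus_X_power_mult_part_gf[of 1 N e] assms by simp
  finally show ?thesis .
qed

text \<open>Both sides are \<open>[b]_q F\<close> and \<open>[c]_q F\<close> for \<open>F = (1 - q) part_gf e N\<close>, whose
  coefficients are nonnegative and nondecreasing since \<open>e 1 \<ge> 2\<close>.\<close>

lemma part_gf_exchange:
  assumes "2 \<le> e 1" "1 \<le> e b" "1 \<le> e c" "1 \<le> b" "b \<le> N" "1 \<le> c" "c \<le> N"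
  shows "part_gf (e(b := e b - 1)) N $ n \<le> of_nat b * part_gf (e(c := e c - 1)) N $ n"
proof -
  define F where "F = part_gf (e(1 := e 1 - 1)) N"
  have "fps_mono_coeffs F"
    unfolding F_def using assms by (intro fps_mono_coeffs_part_gf) auto
  have "part_gf (e(b := e b - 1)) N = qint_fps b * F"
    unfolding F_def using assms by (intro part_gf_remove_eq_qint_fps_mult) auto
  then have "part_gf (e(b := e b - 1)) N $ n = (qint_fps b * F) $ n"
    by simp
  also have "\<dots> \<le> of_nat b * F $ n"
    using fps_nonneg_part_gf \<open>fps_mono_coeffs F\<close> unfolding F_def by (rule qint_fps_mult_nth_le)
  also have "\<dots> \<le> of_nat b * (qint_fps c * F) $ n"
    using fps_nonneg_part_gf assms(6) unfolding F_def
    by (intro mult_left_mono nth_le_qint_fps_mult) auto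
  also have "qint_fps c * F = part_gf (e(c := e c - 1)) N"
    unfolding F_def using assms by (intro part_gf_remove_eq_qint_fps_mult[symmetric]) auto
  finally show ?thesis .
qed

lemma part_gf_exchange_mset:
  assumes "size T = size T'" "3 \<le> e 1" "1 \<notin># T" "count T' 1 \<le> 1"
    "\<And>m. 2 \<le> m \<Longrightarrow> count T m + count T' m \<le> e m"
    "\<And>b. b \<in># T + T' \<Longrightarrow> 1 \<le> b \<and> b \<le> N"
  shows "part_gf (colours_minus e T) N $ n \<le> of_nat (\<Prod>b\<in>#T. b) * part_gf (colours_minus e T') N $ n"
  using assms
proof (induction T arbitrary: e T')
  case (add b T)
  from add.prems(1) obtain c T0' where T': "T' = add_mset c T0'"
    by (metis size_empty size_add_mset nat.distinct(1) multiset_cases)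
  have b: "2 \<le> b" "b \<le> N"
    using add.prems(3) add.prems(6)[of b] by (auto simp: le_Suc_eq)
  have c: "1 \<le> c" "c \<le> N"
    using add.prems(6)[of c] T' by auto
  define e' where "e' = colours_minus e {#b#}"
  define Y where "Y = colours_minus e T0'"
  have IH: "part_gf (colours_minus e' T) N $ n
      \<le> of_nat (\<Prod>b\<in>#T. b) * part_gf (colours_minus e' T0') N $ n"
  proof (rule add.IH)
    show "3 \<le> e' 1"
      using add.prems(2) b by (simp add: e'_def colours_minus_def)
    show "count T m + count T0' m \<le> e' m" if "2 \<le> m" for m
      using add.prems(5)[OF that] T' by (auto simp: e'_def colours_minus_def split: if_splits)
  qed (use add.prems T' in \<open>auto split: if_splits\<close>)
  have step: "part_gf (Y(b := Y b - 1)) N $ n \<le> of_nat b * part_gf (Y(c := Y c - 1)) N $ n"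
  proof (rule part_gf_exchange)
    show "2 \<le> Y 1"
      using add.prems(2,4) T' by (auto simp: Y_def colours_minus_def split: if_splits)
    show "1 \<le> Y b"
      using add.prems(5)[of b] b T' by (auto simp: Y_def colours_minus_def split: if_splits)
    show "1 \<le> Y c"
      using add.prems(2,4) add.prems(5)[of c] c T'
      by (cases "c = 1") (auto simp: Y_def colours_minus_def)
  qed (use b c in auto)
  have Y: "Y(b := Y b - 1) = colours_minus e' T0'" "Y(c := Y c - 1) = colours_minus e T'"
    unfolding e'_def Y_def colours_minus_single[symmetric] colours_minus_colours_minus T'
    by (simp_all add: add.commute)
  have "colours_minus e (add_mset b T) = colours_minus e' T"
    unfolding e'_def colours_minus_colours_minus by simp
  then have "part_gf (colours_minus e (add_mset b T)) N $ n
      \<le> of_nat (\<Prod>b\<in>#T. b) * part_gf (colours_minus e' T0') N $ n"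
    using IH by simp
  also have "\<dots> \<le> of_nat (\<Prod>b\<in>#T. b) * (of_nat b * part_gf (colours_minus e T') N $ n)"
    using step unfolding Y by (rule mult_left_mono) simp
  finally show ?case
    by (simp add: mult_ac)
qed simp

section \<open>Growth of coloured partition numbers\<close>

lemma one_plus_power_minus_one_bounds:
  fixes z :: "'a::linordered_idom fps"
  assumes "fps_nonneg z" "1 \<le> k"
  shows "fps_le (z * (1 + z) ^ (k - 1)) ((1 + z) ^ k - 1)"
    and "fps_le ((1 + z) ^ k - 1) (of_nat k * (z * (1 + z) ^ (k - 1)))"
proof -
  define y where "y = 1 + z"
  have y1: "fps_le 1 y"
    unfolding y_def fps_le_iff_nonneg_diff using assms(1) by simp
  then have y1': "fps_le 1 (y ^ j)" for j
    by (rule fps_one_le_power)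
  have yk: "y ^ k = y * y ^ (k - 1)"
    using assms(2) by (simp flip: power_Suc)
  have diff: "(y ^ k - 1) - z * y ^ (k - 1) = y ^ (k - 1) - 1"
    unfolding yk by (simp add: y_def algebra_simps)
  show "fps_le (z * (1 + z) ^ (k - 1)) ((1 + z) ^ k - 1)"
    using y1'[of "k - 1"] unfolding fps_le_iff_nonneg_diff y_def[symmetric] diff .
  have "y ^ k - 1 = z * (\<Sum>i<k. y ^ i)"
    using one_diff_power_eq[of y k] unfolding y_def by (simp add: algebra_simps)
  also have "fps_le \<dots> (z * (\<Sum>i<k. y ^ (k - 1)))"
  proof (intro fps_le_mult_left fps_le_sum assms(1))
    fix i assume "i \<in> {..<k}"
    then have "y ^ (k - 1) = y ^ i * y ^ (k - 1 - i)"
      by (simp flip: power_add)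
    moreover have "fps_nonneg (y ^ i)"
      using y1'[of i] by (simp add: fps_one_le_iff)
    ultimately show "fps_le (y ^ i) (y ^ (k - 1))"
      using fps_le_mult_one_le y1' by metis
  qed
  finally show "fps_le ((1 + z) ^ k - 1) (of_nat k * (z * (1 + z) ^ (k - 1)))"
    unfolding y_def by (simp add: mult_ac)
qed

lemma telescope_add:
  fixes f :: "nat \<Rightarrow> 'a::ab_group_add"
  shows "f (t + K) = f t + (\<Sum>i\<in>{1..K}. f (t + i) - f (t + i - 1))"
  by (induction K) auto

locale bounded_colours =
  fixes e :: "nat \<Rightarrow> nat" and E :: nat
  assumes colours_bounds: "1 \<le> m \<Longrightarrow> 1 \<le> e m \<and> e m \<le> E"
begin

lemma mono_coeffs_part_gf: "1 \<le> s \<Longrightarrow> fps_mono_coeffs (part_gf e s)"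
  using colours_bounds[of 1] by (intro fps_mono_coeffs_part_gf) auto

lemma fps_nonneg_X_power_mult_part_gf: "fps_nonneg (fps_X ^ s * part_gf e s)"
  by (intro fps_nonneg_mult fps_nonneg_X_power fps_nonneg_part_gf)

text \<open>With \<open>z = q^s / (1 - q^s)\<close> the step from \<open>part_gf e (s - 1)\<close> to \<open>part_gf e s\<close> is a
  multiplication by \<open>(1 + z)^(e s)\<close>.\<close>

lemma part_gf_diff_bounds:
  assumes "1 \<le> s"
  shows "fps_le (fps_X ^ s * part_gf e s) (part_gf e s - part_gf e (s - 1))"
    and "fps_le (part_gf e s - part_gf e (s - 1)) (of_nat E * (fps_X ^ s * part_gf e s))"
proof -
  define y where "y = (geo_fps s :: rat fps)"
  define z where "z = fps_X ^ s * y"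
  define k where "k = e s"
  have k: "1 \<le> k" "k \<le> E"
    using colours_bounds[OF assms] by (auto simp: k_def)
  have yz: "y = 1 + z"
    using one_minus_X_power_mult_geo_fps[OF assms, where 'a=rat]
    unfolding y_def z_def by (simp add: algebra_simps)
  have nz: "fps_nonneg z"
    unfolding z_def y_def by (intro fps_nonneg_mult fps_nonneg_X_power fps_nonneg_geo_fps)
  have G: "part_gf e s = part_gf e (s - 1) * y ^ k"
    using part_gf_Suc[of e "s - 1"] assms by (simp add: y_def k_def)
  have "fps_X ^ s * part_gf e s = part_gf e (s - 1) * ((fps_X ^ s * y) * y ^ (k - 1))"
    unfolding G using k(1) by (simp add: mult_ac flip: power_Suc)
  then have low: "fps_X ^ s * part_gf e s = part_gf e (s - 1) * (z * (1 + z) ^ (k - 1))"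
    unfolding z_def[symmetric] yz[symmetric] .
  have diff: "part_gf e s - part_gf e (s - 1) = part_gf e (s - 1) * ((1 + z) ^ k - 1)"
    unfolding G yz[symmetric] by (simp add: right_diff_distrib)
  show "fps_le (fps_X ^ s * part_gf e s) (part_gf e s - part_gf e (s - 1))"
    unfolding low diff
    by (intro fps_le_mult_left fps_nonneg_part_gf one_plus_power_minus_one_bounds nz k)
  have "fps_le (part_gf e s - part_gf e (s - 1)) (of_nat k * (fps_X ^ s * part_gf e s))"
    unfolding low diff
    using fps_le_mult_left[OF fps_nonneg_part_gf one_plus_power_minus_one_bounds(2)[OF nz k(1)]]
    by (simp add: mult_ac)
  also have "fps_le \<dots> (of_nat E * (fps_X ^ s * part_gf e s))"
    using fps_nonneg_X_power_mult_part_gf k(2) by (rule fps_le_of_nat_mult)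
  finally show "fps_le (part_gf e s - part_gf e (s - 1)) (of_nat E * (fps_X ^ s * part_gf e s))" .
qed

lemma sum_X_power_mult_part_gf_le: "fps_le (\<Sum>s=0..M. fps_X ^ s * part_gf e s) (part_gf e M)"
proof (induction M)
  case (Suc M)
  have "fps_le (\<Sum>s=0..Suc M. fps_X ^ s * part_gf e s) (part_gf e M + (part_gf e (Suc M) - part_gf e M))"
    using fps_le_add[OF Suc part_gf_diff_bounds(1)[of "Suc M"]] by simp
  then show ?case
    by simp
qed (simp add: fps_le_refl)

lemma part_gf_add_le:
  "fps_le (part_gf e (t + L)) (part_gf e t + of_nat E * (\<Sum>i\<in>{1..L}. fps_X ^ (t + i) * part_gf e (t + i)))"
proof -
  have "fps_le (\<Sum>i\<in>{1..L}. part_gf e (t + i) - part_gf e (t + i - 1))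
      (\<Sum>i\<in>{1..L}. of_nat E * (fps_X ^ (t + i) * part_gf e (t + i)))"
    by (rule fps_le_sum) (rule part_gf_diff_bounds(2), auto)
  from fps_le_add[OF fps_le_refl[of "part_gf e t"] this] show ?thesis
    by (simp only: telescope_add[symmetric] sum_distrib_left)
qed

lemma sum_X_power_mult_part_gf_shift_le:
  "fps_le (\<Sum>t=0..T. fps_X ^ t * part_gf e (t + L))
     (of_nat (1 + E * L) * (\<Sum>s=0..T+L. fps_X ^ s * part_gf e s))"
proof -
  define S where "S = (\<Sum>s=0..T+L. fps_X ^ s * part_gf e s)"
  have "fps_le (fps_X ^ t * part_gf e (t + L))
      (fps_X ^ t * part_gf e t + of_nat E * (\<Sum>i\<in>{1..L}. fps_X ^ (t + i) * part_gf e (t + i)))" for t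
  proof -
    have "fps_le (fps_X ^ t * part_gf e (t + L))
        (fps_X ^ t * part_gf e t + of_nat E * (\<Sum>i\<in>{1..L}. fps_X ^ t * (fps_X ^ (t + i) * part_gf e (t + i))))"
      using fps_le_mult_left[OF fps_nonneg_X_power part_gf_add_le, of t t L]
      by (simp add: algebra_simps sum_distrib_left)
    also have "fps_le \<dots> (fps_X ^ t * part_gf e t + of_nat E * (\<Sum>i\<in>{1..L}. fps_X ^ (t + i) * part_gf e (t + i)))"
      by (intro fps_le_add fps_le_refl fps_le_mult_left fps_nonneg_of_nat fps_le_sum fps_le_X_power_mult
          fps_nonneg_X_power_mult_part_gf fps_mono_coeffs_X_power_mult fps_nonneg_part_gf mono_coeffs_part_gf) auto
    finally show ?thesis .
  qed
  then have "fps_le (\<Sum>t=0..T. fps_X ^ t * part_gf e (t + L))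
      (\<Sum>t=0..T. fps_X ^ t * part_gf e t + of_nat E * (\<Sum>i\<in>{1..L}. fps_X ^ (t + i) * part_gf e (t + i)))"
    by (rule fps_le_sum)
  also have "\<dots> = (\<Sum>t=0..T. fps_X ^ t * part_gf e t)
      + of_nat E * (\<Sum>i\<in>{1..L}. \<Sum>t=0..T. fps_X ^ (t + i) * part_gf e (t + i))"
    by (simp add: sum.distrib sum_distrib_left) (subst sum.swap, simp add: add.commute)
  also have "fps_le \<dots> (S + of_nat E * (\<Sum>i\<in>{1..L}. S))"
  proof (intro fps_le_add fps_le_mult_left fps_nonneg_of_nat fps_le_sum)
    show "fps_le (\<Sum>t=0..T. fps_X ^ t * part_gf e t) S"
      unfolding S_def by (rule fps_le_sum_subset) (auto intro: fps_nonneg_X_power_mult_part_gf)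
    fix i assume "i \<in> {1..L}"
    have "(\<Sum>t=0..T. fps_X ^ (t + i) * part_gf e (t + i)) = (\<Sum>s\<in>(\<lambda>t. t + i) ` {0..T}. fps_X ^ s * part_gf e s)"
      by (subst sum.reindex) (auto simp: inj_on_def)
    also have "fps_le \<dots> S"
      unfolding S_def using \<open>i \<in> {1..L}\<close>
      by (intro fps_le_sum_subset) (auto intro: fps_nonneg_X_power_mult_part_gf)
    finally show "fps_le (\<Sum>t=0..T. fps_X ^ (t + i) * part_gf e (t + i)) S" .
  qed
  also have "S + of_nat E * (\<Sum>i\<in>{1..L}. S) = of_nat (1 + E * L) * S"
    by (simp add: algebra_simps)
  finally show ?thesis
    unfolding S_def .
qed

text \<open>The left-hand side counts partitions whose largest part \<open>s\<close> is at least \<open>L\<close>. Grouped by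
  \<open>s\<close>, they are at most \<open>E\<close> times the sum of \<open>q^s part_gf e s\<close> over \<open>s \<ge> L\<close>, which the
  two preceding lemmas bound.\<close>

lemma part_gf_diff_small_parts_le:
  assumes "1 \<le> L" "L \<le> N"
  shows "fps_le (part_gf e N - part_gf e (L - 1)) (of_nat (E * (1 + E * L)) * (fps_X ^ L * part_gf e N))"
proof -
  define t where "t = L - 1"
  define K where "K = N - t"
  have K: "1 \<le> K" "N = t + K" "L = Suc t"
    using assms by (auto simp: t_def K_def)
  have "part_gf e N - part_gf e t = (\<Sum>i\<in>{1..K}. part_gf e (t + i) - part_gf e (t + i - 1))"
    using telescope_add[of "part_gf e" t K] K by simp
  also have "fps_le \<dots> (\<Sum>i\<in>{1..K}. of_nat E * (fps_X ^ (t + i) * part_gf e (t + i)))"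
    by (rule fps_le_sum) (rule part_gf_diff_bounds(2), auto)
  also have "(\<Sum>i\<in>{1..K}. of_nat E * (fps_X ^ (t + i) * part_gf e (t + i)))
      = of_nat E * (fps_X ^ L * (\<Sum>j=0..K-1. fps_X ^ j * part_gf e (j + L)))"
  proof -
    have "(\<Sum>i\<in>{1..K}. fps_X ^ (t + i) * part_gf e (t + i))
        = (\<Sum>j=0..K-1. fps_X ^ (t + Suc j) * part_gf e (t + Suc j))"
      using K(1) sum.shift_bounds_cl_Suc_ivl[of "\<lambda>i. fps_X ^ (t + i) * part_gf e (t + i)" 0 "K - 1"]
      by simp
    also have "\<dots> = fps_X ^ L * (\<Sum>j=0..K-1. fps_X ^ j * part_gf e (j + L))"
      unfolding sum_distrib_left by (intro sum.cong refl) (simp add: K(3) power_add mult_ac add_ac)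
    finally have h: "(\<Sum>i\<in>{1..K}. fps_X ^ (t + i) * part_gf e (t + i))
        = fps_X ^ L * (\<Sum>j=0..K-1. fps_X ^ j * part_gf e (j + L))" .
    show ?thesis
      unfolding sum_distrib_left[symmetric] h ..
  qed
  also have "fps_le \<dots> (of_nat E * (fps_X ^ L * (of_nat (1 + E * L) * (\<Sum>s=0..K-1+L. fps_X ^ s * part_gf e s))))"
    by (intro fps_le_mult_left fps_nonneg_of_nat fps_nonneg_X_power sum_X_power_mult_part_gf_shift_le)
  also have "K - 1 + L = N"
    using K by simp
  also have "fps_le (of_nat E * (fps_X ^ L * (of_nat (1 + E * L) * (\<Sum>s=0..N. fps_X ^ s * part_gf e s))))
      (of_nat E * (fps_X ^ L * (of_nat (1 + E * L) * part_gf e N)))"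
    by (intro fps_le_mult_left fps_nonneg_of_nat fps_nonneg_X_power sum_X_power_mult_part_gf_le)
  also have "of_nat E * (fps_X ^ L * (of_nat (1 + E * L) * part_gf e N))
      = of_nat (E * (1 + E * L)) * (fps_X ^ L * part_gf e N)"
    by (simp add: algebra_simps)
  finally show ?thesis
    unfolding t_def .
qed

lemma part_count_le:
  assumes "1 \<le> L" "L \<le> n"
  shows "part_count e n \<le> part_gf e (L - 1) $ n + of_nat (E * (1 + E * L)) * part_count e (n - L)"
proof -
  have "(part_gf e n - part_gf e (L - 1)) $ n \<le> (of_nat (E * (1 + E * L)) * (fps_X ^ L * part_gf e n)) $ n"
    using part_gf_diff_small_parts_le[OF assms] unfolding fps_le_def by blast
  moreover have "part_gf e n $ (n - L) = part_count e (n - L)"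
    by (rule part_gf_nth) simp
  ultimately show ?thesis
    using assms by (simp add: part_count_def fps_X_power_mult_nth flip: fps_of_nat)
qed

end

lemma coeff_mult_geo_fps_power_le:
  fixes f :: "'a::linordered_idom fps"
  assumes "fps_nonneg f" "\<And>i. f $ i \<le> (of_nat i + 1) ^ k"
  shows "(f * geo_fps m ^ j) $ n \<le> (of_nat n + 1) ^ (k + j)"
proof (induction j arbitrary: n)
  case (Suc j)
  have nonneg: "fps_nonneg (f * geo_fps m ^ j)"
    by (intro fps_nonneg_mult fps_nonneg_power fps_nonneg_geo_fps assms(1))
  have "f * geo_fps m ^ Suc j = (f * geo_fps m ^ j) * geo_fps m"
    by (simp add: mult_ac)
  then have "(f * geo_fps m ^ Suc j) $ n = (\<Sum>i=0..n. (f * geo_fps m ^ j) $ i * geo_fps m $ (n - i))"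
    by (simp only: fps_mult_nth)
  also have "\<dots> \<le> (\<Sum>i=0..n. (of_nat n + 1) ^ (k + j))"
  proof (rule sum_mono)
    fix i assume "i \<in> {0..n}"
    have "(f * geo_fps m ^ j) $ i * geo_fps m $ (n - i) \<le> (f * geo_fps m ^ j) $ i"
      using nonneg by (simp add: geo_fps_nth fps_nonneg_def)
    also have "\<dots> \<le> (of_nat i + 1) ^ (k + j)"
      by (rule Suc.IH)
    also have "\<dots> \<le> (of_nat n + 1) ^ (k + j)"
      using \<open>i \<in> {0..n}\<close> by (intro power_mono) auto
    finally show "(f * geo_fps m ^ j) $ i * geo_fps m $ (n - i) \<le> (of_nat n + 1) ^ (k + j)" .
  qed
  also have "\<dots> = (of_nat n + 1) ^ (k + Suc j)"
    by simp
  finally show ?case .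
qed (simp add: assms(2))

lemma part_gf_nth_le_power: "part_gf e M $ n \<le> (of_nat n + 1) ^ (\<Sum>m\<in>{1..M}. e m)"
proof (induction M arbitrary: n)
  case (Suc M)
  show ?case
    using coeff_mult_geo_fps_power_le[OF fps_nonneg_part_gf Suc.IH]
    by (simp add: part_gf_Suc)
qed simp

lemma geo_fps_le_power:
  assumes "1 \<le> m" "1 \<le> j"
  shows "fps_le (geo_fps m :: 'a::linordered_idom fps) (geo_fps m ^ j)"
proof -
  have "fps_le 1 (geo_fps m ^ (j - 1) :: 'a fps)"
    using assms(1) by (simp add: fps_one_le_iff fps_nonneg_power fps_nonneg_geo_fps geo_fps_power_nth_less)
  then have "fps_le (geo_fps m) (geo_fps m * geo_fps m ^ (j - 1) :: 'a fps)"
    by (rule fps_le_mult_one_le[OF fps_nonneg_geo_fps])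
  then show ?thesis
    using assms(2) by (simp flip: power_Suc)
qed

lemma geo_fps_le_geo_fps: "m dvd c \<Longrightarrow> fps_le (geo_fps c) (geo_fps m)"
  unfolding fps_le_def geo_fps_nth by (auto intro: dvd_trans)

lemma sum_nth_le_mult_geo_fps:
  fixes w :: "'a::linordered_idom fps"
  assumes "fps_nonneg w" "1 \<le> c" "J * c \<le> n"
  shows "(\<Sum>j=0..J. w $ (n - j * c)) \<le> (w * geo_fps c) $ n"
proof -
  have jc: "j * c \<le> n" if "j \<le> J" for j
    using that assms(3) by (meson le_trans mult_le_mono1)
  have "(\<Sum>j=0..J. w $ (n - j * c)) = (\<Sum>i\<in>(\<lambda>j. n - j * c) ` {0..J}. w $ i * geo_fps c $ (n - i))"
  proof (subst sum.reindex)
    show "inj_on (\<lambda>j. n - j * c) {0..J}"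
    proof (rule inj_onI)
      fix a b assume "a \<in> {0..J}" "b \<in> {0..J}" "n - a * c = n - b * c"
      then have "a * c = b * c"
        using jc[of a] jc[of b] by (metis atLeastAtMost_iff diff_diff_cancel)
      then show "a = b"
        using assms(2) by simp
    qed
  qed (use jc in \<open>auto intro!: sum.cong simp: geo_fps_nth\<close>)
  also have "\<dots> \<le> (\<Sum>i=0..n. w $ i * geo_fps c $ (n - i))"
    using assms(1) by (intro sum_mono2) (auto simp: geo_fps_nth fps_nonneg_def)
  also have "\<dots> = (w * geo_fps c) $ n"
    by (simp only: fps_mult_nth)
  finally show ?thesis .
qed

text \<open>\<open>(geo_fps 1 * geo_fps c ^ T) $ n\<close> counts the solutions of \<open>x_0 + c (x_1 + \<dots> + x_T) = n\<close>;
  for the bound, \<open>x_T\<close> ranges over \<open>0, \<dots>, (n div c) div 2\<close>.\<close>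

lemma geo_fps_mult_power_nth_ge:
  assumes "1 \<le> c"
  shows "of_nat (((n div c) div 2 ^ T) ^ T) \<le> (geo_fps 1 * geo_fps c ^ T :: rat fps) $ n"
proof (induction T arbitrary: n)
  case 0
  then show ?case
    by (simp add: geo_fps_nth)
next
  case (Suc T)
  define x where "x = n div c"
  define w :: "rat fps" where "w = geo_fps 1 * geo_fps c ^ T"
  have xc: "x div 2 * c \<le> n"
    unfolding x_def by (meson div_le_dividend div_times_less_eq_dividend le_trans mult_le_mono1)
  have "of_nat ((x div 2 ^ Suc T) ^ T) \<le> w $ (n - j * c)" if "j \<in> {0..x div 2}" for j
  proof -
    have "j * c \<le> n"
      using that xc by (meson atLeastAtMost_iff le_trans mult_le_mono1)
    then have "(n - j * c) div c = x - j"
      using assms div_mult_self1[of c "n - j * c" j] unfolding x_def by simp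
    then have "x div 2 ^ Suc T \<le> (n - j * c) div c div 2 ^ T"
      using that by (auto intro!: div_le_mono simp: div_mult2_eq)
    then have "of_nat ((x div 2 ^ Suc T) ^ T) \<le> (of_nat (((n - j * c) div c div 2 ^ T) ^ T) :: rat)"
      by (intro of_nat_mono power_mono) auto
    also have "\<dots> \<le> w $ (n - j * c)"
      unfolding w_def by (rule Suc.IH)
    finally show ?thesis .
  qed
  then have "(\<Sum>j=0..x div 2. of_nat ((x div 2 ^ Suc T) ^ T)) \<le> (\<Sum>j=0..x div 2. w $ (n - j * c))"
    by (rule sum_mono)
  also have "\<dots> \<le> (w * geo_fps c) $ n"
    unfolding w_def using assms xc
    by (intro sum_nth_le_mult_geo_fps fps_nonneg_mult fps_nonneg_geo_fps fps_nonneg_power)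
  also have "w * geo_fps c = geo_fps 1 * geo_fps c ^ Suc T"
    by (simp add: w_def mult_ac)
  finally have sum_le:
    "of_nat (Suc (x div 2) * (x div 2 ^ Suc T) ^ T) \<le> (geo_fps 1 * geo_fps c ^ Suc T :: rat fps) $ n"
    by (simp add: algebra_simps)
  have "x div 2 ^ Suc T \<le> Suc (x div 2)"
    by (metis div_le_dividend div_mult2_eq le_SucI power_Suc)
  then have "(x div 2 ^ Suc T) ^ Suc T \<le> Suc (x div 2) * (x div 2 ^ Suc T) ^ T"
    unfolding power_Suc[of "x div 2 ^ Suc T"] by (rule mult_right_mono) simp
  then have "of_nat ((x div 2 ^ Suc T) ^ Suc T) \<le> (of_nat (Suc (x div 2) * (x div 2 ^ Suc T) ^ T) :: rat)"
    by (simp only: of_nat_le_iff)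
  then show ?case
    using sum_le unfolding x_def[symmetric] by linarith
qed

text \<open>Keep the parts \<open>1, \<dots>, T + 1\<close> with one colour each, and use \<open>geo_fps c \<le> geo_fps m\<close>
  for the multiple \<open>c = (T + 1)!\<close> of every \<open>m \<le> T + 1\<close>.\<close>

lemma part_count_ge_power:
  assumes "\<And>m. 1 \<le> m \<Longrightarrow> 1 \<le> e m"
  shows "of_nat ((n div (fact (Suc T) * 2 ^ T)) ^ T) \<le> part_count e n"
proof -
  define c :: nat where "c = fact (Suc T)"
  define N where "N = n + Suc T"
  have c: "1 \<le> c"
    by (simp add: c_def Suc_leI)
  have "fps_le (\<Prod>m\<in>{2..Suc T}. geo_fps c) (\<Prod>m\<in>{2..Suc T}. geo_fps m)"
    unfolding c_def
    by (intro fps_le_prod fps_nonneg_geo_fps geo_fps_le_geo_fps) (auto simp del: fact_Suc intro: dvd_fact)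
  then have "fps_le (geo_fps 1 * geo_fps c ^ T) (geo_fps 1 * (\<Prod>m\<in>{2..Suc T}. geo_fps m))"
    by (intro fps_le_mult_left fps_nonneg_geo_fps) simp
  also have "geo_fps 1 * (\<Prod>m\<in>{2..Suc T}. geo_fps m) = (\<Prod>m\<in>{1..N}. if m \<le> Suc T then geo_fps m else 1)"
  proof -
    have "{1..Suc T} = insert 1 {2..Suc T}" "{m\<in>{1..N}. m \<le> Suc T} = {1..Suc T}"
      by (auto simp: N_def)
    then show ?thesis
      using prod.inter_filter[of "{1..N}" geo_fps "\<lambda>m. m \<le> Suc T"] by simp
  qed
  also have "fps_le \<dots> (part_gf e N)"
    unfolding part_gf_def using assms geo_fps_le_power
    by (intro fps_le_prod)
      (auto simp: fps_nonneg_geo_fps fps_nonneg_1 fps_one_le_iff fps_nonneg_power geo_fps_power_nth_less)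
  finally have "(geo_fps 1 * geo_fps c ^ T) $ n \<le> part_count e n"
    using part_gf_nth[of n N e] unfolding fps_le_def N_def by (metis le_add1)
  then show ?thesis
    using geo_fps_mult_power_nth_ge[OF c, of n T] by (simp add: c_def div_mult2_eq)
qed

lemma eventually_power_le_div_power:
  assumes "1 \<le> B" "0 < (\<delta>::rat)"
  shows "\<forall>\<^sub>F n in sequentially. (of_nat n + 1) ^ D \<le> \<delta> * of_nat ((n div B) ^ Suc D)"
proof -
  obtain K :: nat where K: "(2 * of_nat B) ^ D / \<delta> < of_nat K"
    using reals_Archimedean2 by blast
  show ?thesis
  proof (rule eventually_sequentiallyI)
    fix n assume n: "B * (K + 1) \<le> n"
    define y where "y = n div B"
    have y: "K + 1 \<le> y"
      using div_le_mono[OF n, of B] assms(1) by (simp add: y_def)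
    have "n = y * B + n mod B" "n mod B < B"
      using assms(1) by (simp_all add: y_def)
    moreover have "B \<le> y * B"
      using y by simp
    ultimately have "n + 1 \<le> 2 * (y * B)"
      by linarith
    then have "(of_nat (n + 1) :: rat) \<le> of_nat (2 * (y * B))"
      by (rule of_nat_mono)
    then have "(of_nat n + 1 :: rat) ^ D \<le> (2 * of_nat B * of_nat y) ^ D"
      by (intro power_mono) (simp_all add: mult_ac)
    also have "\<dots> = (2 * of_nat B) ^ D * of_nat y ^ D"
      by (simp add: power_mult_distrib)
    also have "\<dots> \<le> (\<delta> * of_nat y) * of_nat y ^ D"
    proof (rule mult_right_mono)
      have "(2 * of_nat B) ^ D < \<delta> * of_nat K"
        using K assms(2) by (simp add: divide_less_eq mult.commute)
      also have "\<dots> \<le> \<delta> * of_nat y"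
        using y assms(2) by (intro mult_left_mono) auto
      finally show "(2 * of_nat B) ^ D \<le> \<delta> * of_nat y"
        by simp
    qed simp
    also have "\<dots> = \<delta> * of_nat (y ^ Suc D)"
      by simp
    finally show "(of_nat n + 1) ^ D \<le> \<delta> * of_nat ((n div B) ^ Suc D)"
      unfolding y_def .
  qed
qed

lemma harmonic_sum_power_of_two_ge:
  "(of_nat k / 2 :: 'a::linordered_field) \<le> (\<Sum>L=1..2 ^ k. 1 / of_nat L)"
proof (induction k)
  case (Suc k)
  have split: "{1..2 ^ Suc k} = {1..2 ^ k} \<union> {2 ^ k<..(2::nat) ^ Suc k}"
    using one_le_power[of "2::nat" k] by auto
  have "of_nat (card {2 ^ k<..(2::nat) ^ Suc k}) * (1 / of_nat (2 ^ Suc k))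
      \<le> (\<Sum>L\<in>{2 ^ k<..2 ^ Suc k}. 1 / (of_nat L :: 'a))"
  proof (rule sum_bounded_below)
    fix L assume L: "L \<in> {2 ^ k<..(2::nat) ^ Suc k}"
    then have "(of_nat L :: 'a) \<le> of_nat (2 ^ Suc k)"
      by (simp only: of_nat_le_iff) auto
    then show "1 / of_nat (2 ^ Suc k) \<le> 1 / (of_nat L :: 'a)"
      using L by (intro divide_left_mono) auto
  qed
  then have "1 / 2 \<le> (\<Sum>L\<in>{2 ^ k<..2 ^ Suc k}. 1 / (of_nat L :: 'a))"
    by simp
  then show ?case
    using Suc unfolding split by (subst sum.union_disjoint) (auto simp: field_simps)
qed simp

lemma sum_inverse_quadratic_unbounded:
  assumes "1 \<le> E"
  shows "\<exists>J. B \<le> (\<Sum>L=1..J. 1 / of_nat (E * (1 + E * L)) :: rat)"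
proof -
  obtain k :: nat where k: "4 * of_nat (E * E) * B < of_nat k"
    using reals_Archimedean2 by blast
  have "B \<le> (of_nat k / 2) / (2 * of_nat (E * E))"
    using k assms by (simp add: field_simps)
  also have "\<dots> \<le> (\<Sum>L=1..2 ^ k. 1 / of_nat L) / (2 * of_nat (E * E))"
    by (intro divide_right_mono harmonic_sum_power_of_two_ge) simp
  also have "\<dots> = (\<Sum>L=1..2 ^ k. 1 / of_nat (2 * E * E * L))"
    by (simp add: sum_divide_distrib mult_ac)
  also have "\<dots> \<le> (\<Sum>L=1..2 ^ k. 1 / of_nat (E * (1 + E * L)))"
  proof (rule sum_mono)
    fix L :: nat assume "L \<in> {1..2 ^ k}"
    then have "1 \<le> E * L"
      using assms by (simp add: Suc_le_eq)
    then have "E * 1 \<le> E * (E * L)"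
      by (rule mult_le_mono2)
    then have "E * (1 + E * L) \<le> 2 * E * E * L"
      by (simp add: algebra_simps)
    then have le: "(of_nat (E * (1 + E * L)) :: rat) \<le> of_nat (2 * E * E * L)"
      by (simp only: of_nat_le_iff)
    have pos: "(0 :: rat) < of_nat (E * (1 + E * L))"
      using assms by (simp only: of_nat_0_less_iff) simp
    show "1 / of_nat (2 * E * E * L) \<le> 1 / (of_nat (E * (1 + E * L)) :: rat)"
      using le pos by (intro divide_left_mono mult_pos_pos) auto
  qed
  finally show ?thesis ..
qed

lemma (in bounded_colours) part_count_shift_ge:
  assumes "1 \<le> L" "L \<le> n" "(of_nat n + 1) ^ (E * L) \<le> part_count e n / 2"
  shows "part_count e n / 2 * (1 / of_nat (E * (1 + E * L))) \<le> part_count e (n - L)"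
proof -
  have "(\<Sum>m=1..L - 1. e m) \<le> (L - 1) * E"
    using sum_bounded_above[of "{1..L - 1}" e E] colours_bounds by simp
  also have "\<dots> \<le> E * L"
    by simp
  finally have "(of_nat n + 1 :: rat) ^ (\<Sum>m=1..L - 1. e m) \<le> (of_nat n + 1) ^ (E * L)"
    by (intro power_increasing) simp_all
  then have "part_gf e (L - 1) $ n \<le> part_count e n / 2"
    using part_gf_nth_le_power[of e "L - 1" n] assms(3) by linarith
  moreover have "part_count e n \<le> part_gf e (L - 1) $ n + of_nat (E * (1 + E * L)) * part_count e (n - L)"
    using assms(1,2) by (rule part_count_le)
  ultimately have "part_count e n / 2 \<le> of_nat (E * (1 + E * L)) * part_count e (n - L)"
    by linarith
  moreover have "(0::rat) < of_nat (E * (1 + E * L))"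
    using colours_bounds[of 1] by (simp only: of_nat_0_less_iff) simp
  ultimately show ?thesis
    by (simp add: field_simps)
qed

text \<open>For \<open>L \<le> J\<close> the polynomial \<open>(n + 1)^(E L)\<close> is eventually below \<open>part_count e n / 2\<close>
  by \<open>part_count_ge_power\<close>; summing \<open>part_count_shift_ge\<close> over \<open>L\<close>, the divergence of the
  harmonic series beats any \<open>\<epsilon>\<close>.\<close>

lemma (in bounded_colours) part_count_negligible:
  assumes "0 < \<epsilon>"
  shows "\<forall>\<^sub>F n in sequentially. part_count e n \<le> \<epsilon> * (\<Sum>i=0..n. part_count e i)"
proof -
  have E: "1 \<le> E"
    using colours_bounds[of 1] by simp
  obtain J where J: "2 / \<epsilon> \<le> (\<Sum>L=1..J. 1 / of_nat (E * (1 + E * L)) :: rat)"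
    using sum_inverse_quadratic_unbounded[OF E] by blast
  define D where "D = E * J"
  define B :: nat where "B = fact (Suc (Suc D)) * 2 ^ Suc D"
  have "1 \<le> B"
    by (simp add: B_def Suc_leI)
  then have "\<forall>\<^sub>F n in sequentially. (of_nat n + 1 :: rat) ^ D \<le> 1 / 2 * of_nat ((n div B) ^ Suc D)"
    by (rule eventually_power_le_div_power) simp
  then have "\<forall>\<^sub>F n in sequentially. J \<le> n \<and> (of_nat n + 1 :: rat) ^ D \<le> 1 / 2 * of_nat ((n div B) ^ Suc D)"
    by (intro eventually_conj eventually_ge_at_top)
  then show ?thesis
  proof (rule eventually_mono, elim conjE)
    fix n assume n: "J \<le> n" and poly: "(of_nat n + 1 :: rat) ^ D \<le> 1 / 2 * of_nat ((n div B) ^ Suc D)"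
    have "of_nat ((n div B) ^ Suc D) \<le> part_count e n"
      unfolding B_def using colours_bounds by (intro part_count_ge_power) auto
    then have small: "(of_nat n + 1) ^ D \<le> part_count e n / 2"
      using poly by simp
    have "(of_nat n + 1 :: rat) ^ (E * L) \<le> part_count e n / 2" if "L \<in> {1..J}" for L
      using that small power_increasing[of "E * L" D "of_nat n + 1 :: rat"] by (simp add: D_def)
    then have each: "part_count e n / 2 * (1 / of_nat (E * (1 + E * L))) \<le> part_count e (n - L)"
      if "L \<in> {1..J}" for L
      using that n by (intro part_count_shift_ge) auto
    have "part_count e n / 2 * (2 / \<epsilon>) \<le> part_count e n / 2 * (\<Sum>L=1..J. 1 / of_nat (E * (1 + E * L)))"
      using J part_count_nonneg by (intro mult_left_mono) auto
    also have "\<dots> \<le> (\<Sum>L=1..J. part_count e (n - L))"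
      unfolding sum_distrib_left using each by (rule sum_mono)
    also have "\<dots> = (\<Sum>i\<in>(\<lambda>L. n - L) ` {1..J}. part_count e i)"
      using n by (subst sum.reindex) (auto simp: inj_on_def)
    also have "\<dots> \<le> (\<Sum>i=0..n. part_count e i)"
      using part_count_nonneg by (intro sum_mono2) auto
    finally show "part_count e n \<le> \<epsilon> * (\<Sum>i=0..n. part_count e i)"
      using assms by (simp add: field_simps)
  qed
qed

section \<open>A decomposition of \<open>(1 - q)\<^sup>r\<close>\<close>

definition qint :: "nat \<Rightarrow> rat poly" where
  "qint b = (\<Sum>i<b. [:0, 1:] ^ i)"

lemma one_minus_X_mult_qint: "(1 - [:0, 1:]) * qint b = 1 - [:0, 1:] ^ b"
  unfolding qint_def by (rule one_diff_power_eq[symmetric])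

lemma qint_add: "qint (a + b) = qint a + [:0, 1:] ^ a * qint b"
proof -
  have "(\<Sum>i<a + b. [:0, 1:] ^ i) = (\<Sum>i=0..<a. [:0, 1:] ^ i) + (\<Sum>i=a..<a + b. [:0, 1:] ^ i :: rat poly)"
    by (simp add: lessThan_atLeast0 sum.atLeastLessThan_concat)
  also have "(\<Sum>i=a..<a + b. [:0, 1:] ^ i :: rat poly) = (\<Sum>i=0..<b. [:0, 1:] ^ (i + a))"
    using sum.shift_bounds_nat_ivl[of "\<lambda>i. [:0, 1:] ^ i" 0 a b] by (simp add: add.commute)
  also have "\<dots> = [:0, 1:] ^ a * (\<Sum>i<b. [:0, 1:] ^ i)"
    by (simp add: sum_distrib_left power_add lessThan_atLeast0 mult.commute)
  finally show ?thesis
    unfolding qint_def by (simp add: lessThan_atLeast0)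
qed

lemma poly_qint_1: "poly (qint a) 1 = of_nat a"
  by (simp add: qint_def poly_sum)

lemma coprime_add_mult_right:
  fixes x y z :: "rat poly"
  assumes "coprime x y"
  shows "coprime x (y + z * x)"
proof (rule coprimeI)
  fix d assume d: "d dvd x" "d dvd y + z * x"
  then have "d dvd y"
    by (metis dvd_add_left_iff dvd_mult)
  then show "is_unit d"
    using d assms coprime_common_divisor by blast
qed

lemma coprime_qint: "coprime a b \<Longrightarrow> coprime (qint a) (qint b)"
proof (induction "a + b" arbitrary: a b rule: less_induct)
  case less
  have step: "coprime (qint x) (qint (y + x))"
    if "coprime x (y + x)" "x + y < a + b" for x y
  proof -
    have "coprime x y"
      using that(1) gcd_add2[of x y] by (simp only: coprime_iff_gcd_eq_1 add.commute)
    then have "coprime (qint x) (qint y)"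
      using less.hyps that(2) by simp
    then have "coprime (qint x) (qint y + [:0, 1:] ^ y * qint x)"
      by (rule coprime_add_mult_right)
    then show ?thesis
      by (simp add: qint_add)
  qed
  consider "a = 0 \<or> b = 0" | "0 < a" "a \<le> b" | "0 < b" "b < a"
    by linarith
  then show ?case
  proof cases
    case 1
    then have "a = 0 \<and> b = 1 \<or> b = 0 \<and> a = 1"
      using less.prems by auto
    then show ?thesis
      by (auto simp: qint_def)
  next
    case 2
    then show ?thesis
      using step[of a "b - a"] less.prems by simp
  next
    case 3
    then show ?thesis
      using step[of b "a - b"] less.prems by (simp add: coprime_commute add.commute)
  qed
qed

lemma prod_one_minus_X_power:
  "(\<Prod>a\<in>A. 1 - [:0, 1:] ^ a) = (1 - [:0, 1:]) ^ card A * (\<Prod>a\<in>A. qint a)"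
  by (simp add: one_minus_X_mult_qint[symmetric] prod.distrib)

lemma prod_of_nat_2_Suc: "(\<Prod>a=2..Suc r. (of_nat a :: 'a::{comm_semiring_1,semiring_char_0})) = fact (Suc r)"
proof -
  have "{1..Suc r} = insert 1 {2..Suc r}"
    by auto
  then have "(\<Prod>a=1..Suc r. (of_nat a :: 'a)) = (\<Prod>a=2..Suc r. of_nat a)"
    by (simp del: prod.cl_ivl_Suc)
  then show ?thesis
    by (simp only: fact_prod of_nat_prod)
qed

text \<open>With \<open>c = 1 / (r + 1)!\<close> the polynomial \<open>1 - c [2]_q \<cdots> [r + 1]_q\<close> vanishes at \<open>q = 1\<close>.
  Since every q-integer \<open>[a]_q\<close>, \<open>a \<in> A\<close>, is coprime to every \<open>[b]_q\<close>, \<open>b \<in> B\<close>, Bezout puts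
  \<open>(1 - q)^(r + 1)\<close> into the ideal generated by the two products of the \<open>1 - q^a\<close>.\<close>

lemma one_minus_X_power_decomposition_poly:
  assumes "finite A" "finite B" "card A = Suc r" "card B = Suc r"
    and "\<And>a b. a \<in> A \<Longrightarrow> b \<in> B \<Longrightarrow> coprime a b"
  shows "\<exists>R1 R2. (1 - [:0, 1:] :: rat poly) ^ r = smult (1 / fact (Suc r)) (\<Prod>a=2..Suc r. 1 - [:0, 1:] ^ a)
    + R1 * (\<Prod>a\<in>A. 1 - [:0, 1:] ^ a) + R2 * (\<Prod>b\<in>B. 1 - [:0, 1:] ^ b)"
proof -
  define c :: rat where "c = 1 / fact (Suc r)"
  define P where "P = (\<Prod>a=2..Suc r. qint a)"
  have "poly P 1 = fact (Suc r)"
    unfolding P_def by (simp only: poly_prod poly_qint_1 prod_of_nat_2_Suc)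
  then have "poly (1 - smult c P) 1 = 0"
    by (simp add: c_def)
  then obtain Q where Q: "1 - smult c P = [:-1, 1:] * Q"
    using poly_eq_0_iff_dvd by (metis dvdE)
  have "coprime (\<Prod>a\<in>A. qint a) (\<Prod>b\<in>B. qint b)"
    using assms(5) by (intro prod_coprime_left prod_coprime_right coprime_qint)
  then obtain u v where uv: "u * (\<Prod>a\<in>A. qint a) + v * (\<Prod>b\<in>B. qint b) = 1"
    using bezout_coefficients_fst_snd by (metis coprime_imp_gcd_eq_1)
  have "(1 - [:0, 1:]) ^ r = smult c ((1 - [:0, 1:]) ^ r * P) + (1 - [:0, 1:]) ^ r * (1 - smult c P)"
    by (simp add: algebra_simps)
  also have "(1 - [:0, 1:]) ^ r * P = (\<Prod>a=2..Suc r. 1 - [:0, 1:] ^ a)"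
    unfolding P_def prod_one_minus_X_power by simp
  also have "(1 - [:0, 1:]) ^ r * (1 - smult c P) = (1 - [:0, 1:]) ^ Suc r * (- Q)"
    unfolding Q by (simp add: one_pCons algebra_simps)
  also have "(1 - [:0, 1:]) ^ Suc r = (1 - [:0, 1:]) ^ Suc r * (u * (\<Prod>a\<in>A. qint a) + v * (\<Prod>b\<in>B. qint b))"
    unfolding uv by simp
  also have "\<dots> = u * (\<Prod>a\<in>A. 1 - [:0, 1:] ^ a) + v * (\<Prod>b\<in>B. 1 - [:0, 1:] ^ b)"
    unfolding prod_one_minus_X_power assms(3,4) by (simp add: algebra_simps)
  finally have "(1 - [:0, 1:]) ^ r = smult c (\<Prod>a=2..Suc r. 1 - [:0, 1:] ^ a)
      + (- Q * u) * (\<Prod>a\<in>A. 1 - [:0, 1:] ^ a) + (- Q * v) * (\<Prod>b\<in>B. 1 - [:0, 1:] ^ b)"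
    by (simp add: algebra_simps)
  then show ?thesis
    unfolding c_def by blast
qed

lemma one_minus_X_power_decomposition:
  assumes "finite A" "finite B" "card A = Suc r" "card B = Suc r"
    and "\<And>a b. a \<in> A \<Longrightarrow> b \<in> B \<Longrightarrow> coprime a b"
  obtains R1 R2 :: "rat poly" where "(1 - fps_X :: rat fps) ^ r
    = fps_const (1 / fact (Suc r)) * (\<Prod>a=2..Suc r. 1 - fps_X ^ a)
      + fps_of_poly R1 * (\<Prod>a\<in>A. 1 - fps_X ^ a) + fps_of_poly R2 * (\<Prod>b\<in>B. 1 - fps_X ^ b)"
proof -
  obtain R1 R2 where "(1 - [:0, 1:] :: rat poly) ^ r = smult (1 / fact (Suc r)) (\<Prod>a=2..Suc r. 1 - [:0, 1:] ^ a)
    + R1 * (\<Prod>a\<in>A. 1 - [:0, 1:] ^ a) + R2 * (\<Prod>b\<in>B. 1 - [:0, 1:] ^ b)"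
    using one_minus_X_power_decomposition_poly[OF assms] by blast
  then have "fps_of_poly ((1 - [:0, 1:]) ^ r) = fps_of_poly (smult (1 / fact (Suc r)) (\<Prod>a=2..Suc r. 1 - [:0, 1:] ^ a)
    + R1 * (\<Prod>a\<in>A. 1 - [:0, 1:] ^ a) + R2 * (\<Prod>b\<in>B. 1 - [:0, 1:] ^ b))"
    by (rule arg_cong)
  then have "(1 - fps_X :: rat fps) ^ r
    = fps_const (1 / fact (Suc r)) * (\<Prod>a=2..Suc r. 1 - fps_X ^ a)
      + fps_of_poly R1 * (\<Prod>a\<in>A. 1 - fps_X ^ a) + fps_of_poly R2 * (\<Prod>b\<in>B. 1 - fps_X ^ b)"
    by (simp only: fps_of_poly_add fps_of_poly_mult fps_of_poly_smult fps_of_poly_prod fps_of_poly_diff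
        fps_of_poly_power fps_of_poly_1 fps_of_poly_fps_X)
  then show ?thesis
    by (rule that)
qed

definition poly_abs_coeff_sum :: "rat poly \<Rightarrow> rat" where
  "poly_abs_coeff_sum R = (\<Sum>i\<le>degree R. \<bar>coeff R i\<bar>)"

lemma poly_abs_coeff_sum_nonneg: "0 \<le> poly_abs_coeff_sum R"
  unfolding poly_abs_coeff_sum_def by (intro sum_nonneg) auto

lemma abs_fps_of_poly_mult_nth_le:
  assumes "fps_nonneg F" "fps_mono_coeffs F"
  shows "\<bar>(fps_of_poly R * F) $ n\<bar> \<le> poly_abs_coeff_sum R * F $ n"
proof -
  have F: "0 \<le> F $ i" for i
    using assms(1) by (simp add: fps_nonneg_def)
  have "\<bar>(fps_of_poly R * F) $ n\<bar> \<le> (\<Sum>i=0..n. \<bar>coeff R i\<bar> * F $ (n - i))"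
    unfolding fps_mult_nth by (rule order_trans[OF sum_abs]) (simp add: abs_mult F)
  also have "\<dots> \<le> (\<Sum>i=0..n. \<bar>coeff R i\<bar> * F $ n)"
    by (intro sum_mono mult_left_mono fps_mono_coeffsD[OF assms(2)]) auto
  also have "\<dots> = (\<Sum>i=0..n. \<bar>coeff R i\<bar>) * F $ n"
    by (simp add: sum_distrib_right)
  also have "\<dots> \<le> poly_abs_coeff_sum R * F $ n"
  proof (rule mult_right_mono)
    have "(\<Sum>i=0..n. \<bar>coeff R i\<bar>) \<le> (\<Sum>i=0..max n (degree R). \<bar>coeff R i\<bar>)"
      by (rule sum_mono2) auto
    also have "\<dots> = poly_abs_coeff_sum R"
      unfolding poly_abs_coeff_sum_def by (rule sum.mono_neutral_right) (auto simp: coeff_eq_0)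
    finally show "(\<Sum>i=0..n. \<bar>coeff R i\<bar>) \<le> poly_abs_coeff_sum R" .
  qed (rule F)
  finally show ?thesis .
qed

section \<open>\<open>\<Delta>\<^sub>k\<close> counts coloured partitions\<close>

definition Delta_colours :: "nat \<Rightarrow> nat \<Rightarrow> nat" where
  "Delta_colours k j = (if odd j \<and> \<not> (2 * k + 1) dvd j then 3 else 2)"

lemma Delta_factor_eq:
  assumes "1 \<le> m"
  shows "Delta_factor k m
    = (1 - fps_X ^ (2 * m)) * (1 - fps_X ^ ((2 * k + 1) * m)) * geo_fps m ^ 3 * geo_fps ((4 * k + 2) * m)"
proof -
  have "Delta_factor k m = ((1 - fps_X ^ (2 * m)) * (1 - fps_X ^ ((2 * k + 1) * m))) *
      inverse ((1 - fps_X ^ m) ^ 3 * (1 - fps_X ^ ((4 * k + 2) * m)))"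
    unfolding Delta_factor_def using assms by (intro fps_divide_unit) simp
  also have "inverse ((1 - fps_X ^ m) ^ 3 * (1 - fps_X ^ ((4 * k + 2) * m)) :: rat fps)
      = geo_fps m ^ 3 * geo_fps ((4 * k + 2) * m)"
    using assms by (simp add: fps_inverse_mult fps_inverse_power inverse_one_minus_X_power)
  finally show ?thesis
    by (simp add: mult_ac)
qed

definition fps_eq_upto :: "nat \<Rightarrow> 'a::comm_semiring_1 fps \<Rightarrow> 'a fps \<Rightarrow> bool" where
  "fps_eq_upto n f g \<longleftrightarrow> (\<forall>i\<le>n. f $ i = g $ i)"

lemma fps_eq_upto_refl: "fps_eq_upto n f f"
  by (simp add: fps_eq_upto_def)

lemma fps_eq_upto_mult: "fps_eq_upto n a b \<Longrightarrow> fps_eq_upto n c d \<Longrightarrow> fps_eq_upto n (a * c) (b * d)"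
  unfolding fps_eq_upto_def fps_mult_nth by (auto intro!: sum.cong)

lemma fps_eq_upto_prod:
  "(\<And>x. x \<in> A \<Longrightarrow> fps_eq_upto n (f x) (g x)) \<Longrightarrow> fps_eq_upto n (\<Prod>x\<in>A. f x) (\<Prod>x\<in>A. g x)"
  by (induction A rule: infinite_finite_induct) (auto intro: fps_eq_upto_mult fps_eq_upto_refl)

text \<open>Factors indexed by multiples \<open>c m > n\<close> are invisible modulo \<open>q^(n + 1)\<close>, so a product over
  the multiples \<open>c m\<close>, \<open>m \<le> n\<close>, may be rewritten as a product over all \<open>j \<le> n\<close>.\<close>

lemma prod_multiples_eq_upto:
  assumes "1 \<le> c" "\<And>j. n < j \<Longrightarrow> fps_eq_upto n (f j) 1"
  shows "fps_eq_upto n (\<Prod>m=1..n. f (c * m)) (\<Prod>j=1..n. if c dvd j then f j else 1)"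
proof -
  have "fps_eq_upto n (\<Prod>m=1..n. f (c * m)) (\<Prod>m=1..n. if c * m \<le> n then f (c * m) else 1)"
    by (rule fps_eq_upto_prod) (auto intro: fps_eq_upto_refl assms(2))
  also have "(\<Prod>m=1..n. if c * m \<le> n then f (c * m) else 1) = (\<Prod>m\<in>{m\<in>{1..n}. c * m \<le> n}. f (c * m))"
    by (rule prod.inter_filter[symmetric]) simp
  also have "\<dots> = (\<Prod>j\<in>(\<lambda>m. c * m) ` {m\<in>{1..n}. c * m \<le> n}. f j)"
    using assms(1) by (subst prod.reindex) (auto simp: inj_on_def)
  also have "(\<lambda>m. c * m) ` {m\<in>{1..n}. c * m \<le> n} = {j\<in>{1..n}. c dvd j}"
  proof (intro set_eqI iffI)
    fix j assume "j \<in> {j\<in>{1..n}. c dvd j}"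
    then obtain m where m: "j = c * m" "1 \<le> m" "c * m \<le> n"
      by (auto simp: Suc_le_eq)
    moreover have "m \<le> c * m"
      using assms(1) by simp
    then have "m \<le> n"
      using m(3) by linarith
    ultimately show "j \<in> (\<lambda>m. c * m) ` {m\<in>{1..n}. c * m \<le> n}"
      by (intro image_eqI[where x = m]) auto
  qed (use assms(1) in auto)
  also have "(\<Prod>j\<in>{j\<in>{1..n}. c dvd j}. f j) = (\<Prod>j=1..n. if c dvd j then f j else 1)"
    by (rule prod.inter_filter) simp
  finally show ?thesis .
qed

lemma four_k_plus_two_dvd_iff: "(4 * k + 2) dvd (j::nat) \<longleftrightarrow> 2 dvd j \<and> (2 * k + 1) dvd j"
proof -
  have "4 * k + 2 = 2 * (2 * k + 1)" "coprime (2::nat) (2 * k + 1)"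
    by simp_all
  then show ?thesis
    by (metis divides_mult dvd_mult_left dvd_mult_right)
qed

lemma Delta_local_factor_eq:
  assumes "1 \<le> j"
  shows "(if 2 dvd j then 1 - fps_X ^ j else 1) * (if (2 * k + 1) dvd j then 1 - fps_X ^ j else 1)
     * geo_fps j ^ 3 * (if (4 * k + 2) dvd j then geo_fps j else 1) = (geo_fps j ^ Delta_colours k j :: rat fps)"
proof -
  define u :: "rat fps" where "u = 1 - fps_X ^ j"
  define y :: "rat fps" where "y = geo_fps j"
  have uy: "u * y = 1"
    unfolding u_def y_def by (rule one_minus_X_power_mult_geo_fps[OF assms])
  have "u * y ^ 3 = (u * y) * y ^ 2"
    by (simp add: power2_eq_square power3_eq_cube mult_ac)
  then have u3: "u * y ^ 3 = y ^ 2"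
    using uy by simp
  have "u * u * y ^ 3 * y = (u * y ^ 3) * (u * y)"
    by (simp only: mult_ac)
  then have u4: "u * u * y ^ 3 * y = y ^ 2"
    using u3 uy by simp
  show ?thesis
    unfolding u_def[symmetric] y_def[symmetric] four_k_plus_two_dvd_iff Delta_colours_def
    by (cases "2 dvd j"; cases "(2 * k + 1) dvd j") (simp_all only: u3 u4 if_True if_False
        conj_absorb simp_thms mult_1_left mult_1_right)
qed

lemma Delta_eq_part_count: "Delta k n = part_count (Delta_colours k) n"
proof -
  let ?A = "\<Prod>j=1..n. if 2 dvd j then 1 - fps_X ^ j else 1 :: rat fps"
  let ?B = "\<Prod>j=1..n. if (2 * k + 1) dvd j then 1 - fps_X ^ j else 1 :: rat fps"
  let ?C = "\<Prod>j=1..n. geo_fps j ^ 3 :: rat fps"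
  let ?D = "\<Prod>j=1..n. if (4 * k + 2) dvd j then geo_fps j else 1 :: rat fps"
  have one_minus: "fps_eq_upto n (1 - fps_X ^ j :: rat fps) 1" if "n < j" for j
    using that by (auto simp: fps_eq_upto_def fps_X_power_nth)
  have geo: "fps_eq_upto n (geo_fps j :: rat fps) 1" if "n < j" for j
    using that by (auto simp: fps_eq_upto_def geo_fps_nth dest: dvd_imp_le)
  have "(\<Prod>m=1..n. Delta_factor k m)
      = (\<Prod>m=1..n. (1 - fps_X ^ (2 * m)) * (1 - fps_X ^ ((2 * k + 1) * m)) * geo_fps m ^ 3
          * geo_fps ((4 * k + 2) * m))"
    by (rule prod.cong) (auto simp: Delta_factor_eq)
  also have "\<dots> = (\<Prod>m=1..n. 1 - fps_X ^ (2 * m)) * (\<Prod>m=1..n. 1 - fps_X ^ ((2 * k + 1) * m))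
        * ?C * (\<Prod>m=1..n. geo_fps ((4 * k + 2) * m))"
    by (simp only: prod.distrib)
  finally have factors: "(\<Prod>m=1..n. Delta_factor k m)
      = (\<Prod>m=1..n. 1 - fps_X ^ (2 * m)) * (\<Prod>m=1..n. 1 - fps_X ^ ((2 * k + 1) * m))
        * ?C * (\<Prod>m=1..n. geo_fps ((4 * k + 2) * m))" .
  have colours: "?A * ?B * ?C * ?D = part_gf (Delta_colours k) n"
    unfolding part_gf_def prod.distrib[symmetric] by (rule prod.cong[OF refl], rule Delta_local_factor_eq) simp
  have "fps_eq_upto n ((\<Prod>m=1..n. 1 - fps_X ^ (2 * m)) * (\<Prod>m=1..n. 1 - fps_X ^ ((2 * k + 1) * m))
        * ?C * (\<Prod>m=1..n. geo_fps ((4 * k + 2) * m))) (?A * ?B * ?C * ?D)"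
  proof (intro fps_eq_upto_mult fps_eq_upto_refl)
    show "fps_eq_upto n (\<Prod>m=1..n. 1 - fps_X ^ (2 * m)) ?A"
      by (rule prod_multiples_eq_upto[where f = "\<lambda>j. 1 - fps_X ^ j"]) (auto intro: one_minus)
    show "fps_eq_upto n (\<Prod>m=1..n. 1 - fps_X ^ ((2 * k + 1) * m)) ?B"
      by (rule prod_multiples_eq_upto[where f = "\<lambda>j. 1 - fps_X ^ j"]) (auto intro: one_minus)
    show "fps_eq_upto n (\<Prod>m=1..n. geo_fps ((4 * k + 2) * m)) ?D"
      by (rule prod_multiples_eq_upto[where f = geo_fps]) (auto intro: geo)
  qed
  then have "fps_eq_upto n (\<Prod>m=1..n. Delta_factor k m) (part_gf (Delta_colours k) n)"
    unfolding factors colours .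
  then show ?thesis
    unfolding Delta_def part_count_def fps_eq_upto_def by simp
qed

section \<open>Positivity of the forward differences\<close>

lemma forward_difference_nth:
  fixes F :: "'a::comm_ring_1 fps"
  shows "((1 - fps_X) ^ r * F) $ (n + r) = (\<Sum>i=0..r. of_nat (r choose i) * (-1) ^ (r + i) * F $ (n + i))"
proof -
  have "(1 - fps_X :: 'a fps) ^ r = (1 + (- fps_X)) ^ r"
    by simp
  also have "\<dots> = (\<Sum>i\<le>r. of_nat (r choose i) * ((-1) ^ (r - i) * fps_X ^ (r - i)))"
    unfolding binomial_ring by (simp only: power_one mult_1_right power_minus[of "fps_X :: 'a fps"])
  finally have "((1 - fps_X) ^ r * F) $ (n + r)
      = (\<Sum>i\<le>r. (of_nat (r choose i) * ((-1) ^ (r - i) * (fps_X ^ (r - i) * F))) $ (n + r))"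
    by (simp only: sum_distrib_right fps_sum_nth mult.assoc)
  also have "\<dots> = (\<Sum>i=0..r. of_nat (r choose i) * (-1) ^ (r + i) * F $ (n + i))"
  proof (unfold atMost_atLeast0, rule sum.cong[OF refl])
    fix i assume i: "i \<in> {0..r}"
    have "r + i = (r - i) + 2 * i"
      using i by simp
    then have "(-1 :: 'a) ^ (r + i) = (-1) ^ (r - i) * (-1) ^ (2 * i)"
      by (simp only: power_add)
    then have sign: "(-1 :: 'a) ^ (r + i) = (-1) ^ (r - i)"
      by (simp add: power_mult)
    have X: "(fps_X ^ (r - i) * F) $ (n + r) = F $ (n + i)"
      using i by (simp add: fps_X_power_mult_nth)
    have neg: "((-1) ^ j * G) $ k = (-1) ^ j * G $ k" for j k and G :: "'a fps"
      by (cases "even j") simp_all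
    have const: "(of_nat c * G) $ k = of_nat c * G $ k" for c k and G :: "'a fps"
      by (simp flip: fps_of_nat)
    show "(of_nat (r choose i) * ((-1) ^ (r - i) * (fps_X ^ (r - i) * F))) $ (n + r)
        = of_nat (r choose i) * (-1) ^ (r + i) * F $ (n + i)"
      unfolding sign by (simp only: const neg X mult.assoc)
  qed
  finally show ?thesis .
qed

text \<open>The two remainder terms of the decomposition of \<open>(1 - q)^r\<close> remove \<open>r + 1\<close> factors
  other than \<open>1 / (1 - q)\<close>; exchanging them for \<open>1 / (1 - q), \<dots>, 1 / (1 - q^(r + 1))\<close> costs
  a bounded factor.\<close>

lemma remainder_nth_le:
  assumes e: "3 \<le> e 1" "\<And>m. 1 \<le> m \<Longrightarrow> 2 \<le> e m"
    and U: "finite U" "card U = Suc r" "\<And>b. b \<in> U \<Longrightarrow> 2 \<le> b \<and> b \<le> N"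
    and N: "Suc r \<le> N" "m \<le> N"
  shows "\<bar>(fps_of_poly R * part_gf (colours_minus e (mset_set U)) N) $ m\<bar>
    \<le> poly_abs_coeff_sum R * of_nat (\<Prod>U) * part_count (colours_minus e (mset_set {1..Suc r})) m"
proof -
  have "fps_mono_coeffs (part_gf (colours_minus e (mset_set U)) N)"
    using U(1,3) e(1) N(1) by (intro fps_mono_coeffs_part_gf) (auto simp: colours_minus_def count_mset_set')
  then have "\<bar>(fps_of_poly R * part_gf (colours_minus e (mset_set U)) N) $ m\<bar>
      \<le> poly_abs_coeff_sum R * part_gf (colours_minus e (mset_set U)) N $ m"
    by (rule abs_fps_of_poly_mult_nth_le[OF fps_nonneg_part_gf])
  also have "part_gf (colours_minus e (mset_set U)) N $ m
      \<le> of_nat (\<Prod>b\<in>#mset_set U. b) * part_gf (colours_minus e (mset_set {1..Suc r})) N $ m"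
  proof (rule part_gf_exchange_mset)
    show "count (mset_set U) m + count (mset_set {1..Suc r}) m \<le> e m" if "2 \<le> m" for m
      using e(2)[of m] that U(1) by (auto simp: count_mset_set')
  qed (use U e N(1) in \<open>force simp: count_mset_set'\<close>)+
  also have "(\<Prod>b\<in>#mset_set U. b) = \<Prod>U"
    by (simp add: prod_unfold_prod_mset)
  finally show ?thesis
    using N(2) poly_abs_coeff_sum_nonneg
    by (simp add: part_gf_nth mult_left_mono mult.assoc)
qed

lemma coprime_sets_exist:
  obtains A B :: "nat set"
  where "finite A" "finite B" "card A = Suc r" "card B = Suc r"
    "A \<union> B \<subseteq> {2..2 ^ Suc (Suc r)}" "\<And>a b. a \<in> A \<Longrightarrow> b \<in> B \<Longrightarrow> coprime a b"
proof (rule that[of "(\<lambda>i. 2 ^ i :: nat) ` {1..Suc r}" "(\<lambda>i. 2 * i + 1 :: nat) ` {1..Suc r}"])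
  show "card ((\<lambda>i. 2 ^ i :: nat) ` {1..Suc r}) = Suc r" "card ((\<lambda>i. 2 * i + 1 :: nat) ` {1..Suc r}) = Suc r"
    by (simp_all add: card_image inj_on_def)
  show "(\<lambda>i. 2 ^ i :: nat) ` {1..Suc r} \<union> (\<lambda>i. 2 * i + 1 :: nat) ` {1..Suc r} \<subseteq> {2..2 ^ Suc (Suc r) :: nat}"
  proof (intro Un_least image_subsetI)
    fix i assume i: "i \<in> {1..Suc r}"
    have "(2::nat) ^ 1 \<le> 2 ^ i" "(2::nat) ^ i \<le> 2 ^ Suc (Suc r)"
      using i by (simp_all only: atLeastAtMost_iff power_increasing_iff) simp_all
    then show "2 ^ i \<in> {2..2 ^ Suc (Suc r) :: nat}"
      by simp
    have "r < 2 ^ r" "2 ^ Suc (Suc r) = 4 * (2::nat) ^ r" "1 \<le> i" "i \<le> Suc r"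
      using i by (simp_all add: less_exp)
    then show "2 * i + 1 \<in> {2..2 ^ Suc (Suc r) :: nat}"
      unfolding atLeastAtMost_iff by linarith
  qed
  fix a b assume "a \<in> (\<lambda>i. 2 ^ i :: nat) ` {1..Suc r}" "b \<in> (\<lambda>i. 2 * i + 1 :: nat) ` {1..Suc r}"
  then obtain i j where "a = 2 ^ i" "b = 2 * j + 1"
    by blast
  then show "coprime a b"
    by simp
qed simp_all

lemma part_gf_colours_minus_nth_eq_sum:
  assumes "1 \<le> e 1" "Suc r \<le> N" "m \<le> N"
  shows "part_gf (colours_minus e (mset_set {2..Suc r})) N $ m
    = (\<Sum>i=0..m. part_count (colours_minus e (mset_set {1..Suc r})) i)"
proof -
  have "(colours_minus e (mset_set {2..Suc r}))(1 := colours_minus e (mset_set {2..Suc r}) 1 - 1)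
      = colours_minus e (mset_set {1..Suc r})"
    by (auto simp: colours_minus_def fun_eq_iff count_mset_set')
  then show ?thesis
    using assms by (subst part_gf_nth_eq_sum) (auto simp: colours_minus_def count_mset_set')
qed

lemma one_minus_X_power_mult_part_gf_decomposition:
  assumes "(1 - fps_X :: rat fps) ^ r = fps_const c * (\<Prod>a=2..Suc r. 1 - fps_X ^ a)
      + fps_of_poly R1 * (\<Prod>a\<in>A. 1 - fps_X ^ a) + fps_of_poly R2 * (\<Prod>b\<in>B. 1 - fps_X ^ b)"
    and "finite A" "finite B" "Suc r \<le> N"
    and "\<And>a. a \<in> A \<Longrightarrow> 2 \<le> a \<and> a \<le> N" "\<And>b. b \<in> B \<Longrightarrow> 2 \<le> b \<and> b \<le> N"
    and "\<And>m. 1 \<le> m \<Longrightarrow> 1 \<le> e m"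
  shows "(1 - fps_X) ^ r * part_gf e N
    = fps_const c * part_gf (colours_minus e (mset_set {2..Suc r})) N
      + fps_of_poly R1 * part_gf (colours_minus e (mset_set A)) N
      + fps_of_poly R2 * part_gf (colours_minus e (mset_set B)) N"
proof -
  have factors: "(\<Prod>a\<in>U. 1 - fps_X ^ a) * part_gf e N = part_gf (colours_minus e (mset_set U)) N"
    if "finite U" "\<And>a. a \<in> U \<Longrightarrow> 2 \<le> a \<and> a \<le> N" for U
  proof (rule prod_one_minus_X_power_mult_part_gf[OF that(1)])
    fix a assume "a \<in> U"
    then show "1 \<le> a \<and> a \<le> N \<and> 1 \<le> e a"
      using that(2)[of a] assms(7)[of a] by simp
  qed
  have "(\<Prod>a=2..Suc r. 1 - fps_X ^ a) * part_gf e N = part_gf (colours_minus e (mset_set {2..Suc r})) N"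
    using assms(4) by (intro factors) auto
  moreover have "(\<Prod>a\<in>A. 1 - fps_X ^ a) * part_gf e N = part_gf (colours_minus e (mset_set A)) N"
    using assms(2,5) by (rule factors)
  moreover have "(\<Prod>b\<in>B. 1 - fps_X ^ b) * part_gf e N = part_gf (colours_minus e (mset_set B)) N"
    using assms(3,6) by (rule factors)
  ultimately show ?thesis
    unfolding assms(1) distrib_right mult.assoc by (simp only:)
qed

lemma forward_difference_part_count_ge:
  fixes e :: "nat \<Rightarrow> nat" and r :: nat
  assumes e: "3 \<le> e 1" "\<And>m. 1 \<le> m \<Longrightarrow> 2 \<le> e m"
  defines "p \<equiv> part_count (colours_minus e (mset_set {1..Suc r}))"
  obtains K where "0 \<le> K"
    "\<And>n. 1 / fact (Suc r) * (\<Sum>i=0..n + r. p i) - K * p (n + r)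
      \<le> (\<Sum>i=0..r. of_nat (r choose i) * (-1) ^ (r + i) * part_count e (n + i))"
proof -
  obtain A B :: "nat set" where AB: "finite A" "finite B" "card A = Suc r" "card B = Suc r"
    "A \<union> B \<subseteq> {2..2 ^ Suc (Suc r)}" "\<And>a b. a \<in> A \<Longrightarrow> b \<in> B \<Longrightarrow> coprime a b"
    by (rule coprime_sets_exist[of r]) (rule that)
  obtain R1 R2 where R: "(1 - fps_X :: rat fps) ^ r
    = fps_const (1 / fact (Suc r)) * (\<Prod>a=2..Suc r. 1 - fps_X ^ a)
      + fps_of_poly R1 * (\<Prod>a\<in>A. 1 - fps_X ^ a) + fps_of_poly R2 * (\<Prod>b\<in>B. 1 - fps_X ^ b)"
    using one_minus_X_power_decomposition[OF AB(1-4,6)] by blast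
  define K where "K = poly_abs_coeff_sum R1 * of_nat (\<Prod>A) + poly_abs_coeff_sum R2 * of_nat (\<Prod>B)"
  show thesis
  proof (rule that)
    show "0 \<le> K"
      unfolding K_def by (intro add_nonneg_nonneg mult_nonneg_nonneg poly_abs_coeff_sum_nonneg of_nat_0_le_iff)
    fix n
    define m where "m = n + r"
    define N where "N = m + 2 ^ Suc (Suc r)"
    have "Suc r \<le> 2 ^ Suc (Suc r)"
      using less_exp[of "Suc (Suc r)"] by simp
    then have N: "m \<le> N" "Suc r \<le> N" "\<And>a. a \<in> A \<Longrightarrow> 2 \<le> a \<and> a \<le> N"
      "\<And>b. b \<in> B \<Longrightarrow> 2 \<le> b \<and> b \<le> N"
      using AB(5) unfolding N_def by (auto simp: subset_iff)
    have "(1 - fps_X) ^ r * part_gf e N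
        = fps_const (1 / fact (Suc r)) * part_gf (colours_minus e (mset_set {2..Suc r})) N
          + fps_of_poly R1 * part_gf (colours_minus e (mset_set A)) N
          + fps_of_poly R2 * part_gf (colours_minus e (mset_set B)) N"
    proof (rule one_minus_X_power_mult_part_gf_decomposition[OF R AB(1,2) N(2-4)])
      show "1 \<le> e m" if "1 \<le> m" for m
        using e(2)[OF that] by simp
    qed
    moreover have "part_gf (colours_minus e (mset_set {2..Suc r})) N $ m = (\<Sum>i=0..m. p i)"
      unfolding p_def using e(1) N(1,2) by (intro part_gf_colours_minus_nth_eq_sum) auto
    moreover have "\<bar>(fps_of_poly R1 * part_gf (colours_minus e (mset_set A)) N) $ m\<bar>
        \<le> poly_abs_coeff_sum R1 * of_nat (\<Prod>A) * p m"
      unfolding p_def using e AB(1,3) N by (intro remainder_nth_le) auto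
    moreover have "\<bar>(fps_of_poly R2 * part_gf (colours_minus e (mset_set B)) N) $ m\<bar>
        \<le> poly_abs_coeff_sum R2 * of_nat (\<Prod>B) * p m"
      unfolding p_def using e AB(2,4) N by (intro remainder_nth_le) auto
    ultimately have "1 / fact (Suc r) * (\<Sum>i=0..m. p i) - K * p m \<le> ((1 - fps_X) ^ r * part_gf e N) $ m"
      unfolding K_def by (simp add: algebra_simps abs_le_iff)
    also have "\<dots> = (\<Sum>i=0..r. of_nat (r choose i) * (-1) ^ (r + i) * part_count e (n + i))"
      unfolding m_def forward_difference_nth using N(1)
      by (intro sum.cong refl) (simp add: part_gf_nth m_def)
    finally show "1 / fact (Suc r) * (\<Sum>i=0..n + r. p i) - K * p (n + r)
        \<le> (\<Sum>i=0..r. of_nat (r choose i) * (-1) ^ (r + i) * part_count e (n + i))"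
      unfolding m_def .
  qed
qed

theorem forward_difference_part_count_eventually_pos:
  fixes e :: "nat \<Rightarrow> nat" and r :: nat
  assumes "3 \<le> e 1" "\<And>m. 1 \<le> m \<Longrightarrow> 2 \<le> e m \<and> e m \<le> E"
  shows "\<forall>\<^sub>F n in sequentially. 0 < (\<Sum>i=0..r. of_nat (r choose i) * (-1) ^ (r + i) * part_count e (n + i))"
proof -
  define p where "p = part_count (colours_minus e (mset_set {1..Suc r}))"
  define c :: rat where "c = 1 / fact (Suc r)"
  obtain K where K: "0 \<le> K" "\<And>n. c * (\<Sum>i=0..n + r. p i) - K * p (n + r)
      \<le> (\<Sum>i=0..r. of_nat (r choose i) * (-1) ^ (r + i) * part_count e (n + i))"
    using forward_difference_part_count_ge[of e r] assms unfolding p_def c_def by auto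
  interpret bounded_colours "colours_minus e (mset_set {1..Suc r})" E
  proof
    fix m :: nat assume "1 \<le> m"
    then show "1 \<le> colours_minus e (mset_set {1..Suc r}) m \<and> colours_minus e (mset_set {1..Suc r}) m \<le> E"
      using assms(2)[of m] by (auto simp: colours_minus_def count_mset_set')
  qed
  have "0 < c / (2 * (K + 1))"
    using K(1) by (simp add: c_def)
  from part_count_negligible[OF this]
  have "\<forall>\<^sub>F n in sequentially. p (n + r) \<le> c / (2 * (K + 1)) * (\<Sum>i=0..n + r. p i)"
    unfolding p_def by (subst eventually_sequentially_seg)
  then show ?thesis
  proof (rule eventually_mono)
    fix n
    define S where "S = (\<Sum>i=0..n + r. p i)"
    assume "p (n + r) \<le> c / (2 * (K + 1)) * (\<Sum>i=0..n + r. p i)"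
    then have small: "(K + 1) * p (n + r) \<le> c * S / 2"
      using K(1) by (simp add: S_def field_simps)
    have "1 \<le> S"
      using member_le_sum[of 0 "{0..n + r}" p] part_count_nonneg by (simp add: S_def p_def part_count_def)
    then have "0 < c * S"
      by (simp add: c_def)
    moreover have "0 \<le> p (n + r)"
      by (simp add: p_def part_count_nonneg)
    ultimately show "0 < (\<Sum>i=0..r. of_nat (r choose i) * (-1) ^ (r + i) * part_count e (n + i))"
      using K(2)[of n] small unfolding S_def[symmetric] by (simp add: algebra_simps)
  qed
qed

theorem theorem1p4:
  fixes k r :: nat
  assumes "k \<ge> 1" and "r \<ge> 1"
  shows "\<forall>\<^sub>F n in sequentially.
           (\<Sum>i = 0..r. of_nat (r choose i) * (-1) ^ (r + i) * Delta k (n + i)) > (0::rat)"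
proof -
  have "\<forall>\<^sub>F n in sequentially.
      0 < (\<Sum>i = 0..r. of_nat (r choose i) * (-1) ^ (r + i) * part_count (Delta_colours k) (n + i))"
    using assms(1) by (intro forward_difference_part_count_eventually_pos[where E = 3])
      (simp_all add: Delta_colours_def)
  then show ?thesis
    by (simp add: Delta_eq_part_count)
qed

end
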